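(* Every object $(V,\mathsf b,\mathsf t)$ of $\mathcal E_0$ (equivalently, every fiber functor on $\mathbf{CrysTL}$) is isomorphic to an inflation $(V',\mathsf b',\mathsf t')\triangleright(\Bbbk^{\oplus 2m},\mathsf J_2^{\perp m},\mathsf t'')$ with $m>0$, where $(\Bbbk^{\oplus 2m},\mathsf J_2^{\perp m},\mathsf t'')\in\mathcal E_0$ (so $\mathsf t''\in\mathcal R(\mathsf J_2^{\perp m})\otimes\mathcal L(\mathsf J_2^{\perp m})$) and $(V',\mathsf b',\mathsf t')$ is a triple with $\mathsf t'\in\mathcal R(\mathsf b')\otimes\mathcal L(\mathsf b')$ and $\mathsf b'(\mathsf t')=0$.
   Context: $\Bbbk=\mathbb C$. For a bilinear form $\mathsf b$ on a finite-dimensional space $V$, $\mathcal L(\mathsf b)=\{v:\mathsf b(v,-)=0\}$ and $\mathcal R(\mathsf b)=\{v:\mathsf b(-,v)=0\}$, and $\mathsf b(\mathsf t)$ denotes $\mathsf b$ applied to $\mathsf t\in V\otimes V$ as a linear map $V\otimes V\to\Bbbk$. $\mathcal E_0$ is the category whose objects are triples $(V,\mathsf b,\mathsf t)$ with $V$ finite-dimensional, $\mathsf b$ bilinear on $V$, $\mathsf t\in\mathcal R(\mathsf b)\otimes\mathcal L(\mathsf b)$ and $\mathsf b(\mathsf t)=1$; morphisms $(V,\mathsf b,\mathsf t)\to(W,\mathsf c,\mathsf s)$ are linear maps $f$ with $\mathsf c(fv,fw)=\mathsf b(v,w)$ and $(f\otimes f)(\mathsf t)=\mathsf s$. (It is equivalent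 to the category of fiber functors — faithful exact $\Bbbk$-linear monoidal functors to $\mathbf{vec}$ — on the Cauchy completion $\mathbf{CrysTL}$ of the category $\mathcal{TL}_0(\Bbbk)$ generated by $\mathrm{cup}:\mathbf 0\to\mathbf 2$, $\mathrm{cap}:\mathbf 2\to\mathbf 0$ with both zig-zags $0$ and $\mathrm{cap}\circ\mathrm{cup}=\mathrm{id}_{\mathbf 0}$, via $U\mapsto(U(\mathbf 1),U(\mathrm{cap}),U(\mathrm{cup}))$.) Given $(V,\mathsf b,\mathsf t)\in\mathcal E_0$ and a triple $(V',\mathsf b',\mathsf t')$ with $\mathsf t'\in\mathcal R(\mathsf b')\otimes\mathcal L(\mathsf b')$ and $\mathsf b'(\mathsf t')=0$, the inflation is $(V',\mathsf b',\mathsf t')\triangleright(V,\mathsf b,\mathsf t)=(V'\oplus V,\mathsf b'\perp\mathsf b,\mathsf t+\mathsf t')\in\mathcal E_0$, where $\perp$ denotes orthogonal direct sum of forms. $\mathsf J_2$ is the bilinear form on $\Bbbk^2$ with matrix $\begin{pmatrix}0&1\\0&0\end{pmatrix}$, i.e. $\mathsf J_2(x,y)=x_1y_2$, and $\mathsf J_2^{\perp m}$ is the orthogonal sum of $m$ copies on $\Bbbk^{\oplus 2m}$. *)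

theory Defs
  imports Complex_Main "Jordan_Normal_Form.Matrix"
begin

text \<open>Coordinates: a finite-dimensional space V is C^n, vectors are complex vec of
dimension n. A bilinear form b is given by its Gram matrix B (B(i,j) = b(e_i,e_j)),
so b(v,w) = v^T B w. A tensor t in V (x) V is given by its coefficient matrix T,
t = sum_{i,j} T(i,j) e_i (x) e_j.\<close>

definition bil :: "complex mat \<Rightarrow> complex vec \<Rightarrow> complex vec \<Rightarrow> complex" where
  "bil B v w = scalar_prod v (B *\<^sub>v w)"

definition Lrad :: "nat \<Rightarrow> complex mat \<Rightarrow> complex vec set" where
  "Lrad n B = {v \<in> carrier_vec n. \<forall>w \<in> carrier_vec n. bil B v w = 0}"

definition Rrad :: "nat \<Rightarrow> complex mat \<Rightarrow> complex vec set" where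
  "Rrad n B = {v \<in> carrier_vec n. \<forall>w \<in> carrier_vec n. bil B w v = 0}"

definition tensor_in :: "nat \<Rightarrow> complex mat \<Rightarrow> complex vec set \<Rightarrow> complex vec set \<Rightarrow> bool" where
  "tensor_in n T U W \<longleftrightarrow> (\<exists>(k::nat) us ws. (\<forall>i<k. us i \<in> U \<and> ws i \<in> W) \<and>
      T = mat n n (\<lambda>(a, c). \<Sum>i<k. (us i $ a) * (ws i $ c)))"

definition eval_tensor :: "nat \<Rightarrow> complex mat \<Rightarrow> complex mat \<Rightarrow> complex" where
  "eval_tensor n B T = (\<Sum>i<n. \<Sum>j<n. B $$ (i,j) * T $$ (i,j))"

definition E0_obj :: "nat \<Rightarrow> complex mat \<Rightarrow> complex mat \<Rightarrow> bool" where
  "E0_obj n B T \<longleftrightarrow> B \<in> carrier_mat n n \<and> tensor_in n T (Rrad n B) (Lrad n B)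
      \<and> eval_tensor n B T = 1"

definition infl_triple :: "nat \<Rightarrow> complex mat \<Rightarrow> complex mat \<Rightarrow> bool" where
  "infl_triple n B T \<longleftrightarrow> B \<in> carrier_mat n n \<and> tensor_in n T (Rrad n B) (Lrad n B)
      \<and> eval_tensor n B T = 0"

text \<open>Morphisms (V,b,t) -> (W,c,s): linear f (matrix F) with c(fv,fw) = b(v,w)
and (f (x) f)(t) = s, i.e. F T F^T = S.\<close>
definition E0_mor :: "nat \<Rightarrow> complex mat \<Rightarrow> complex mat \<Rightarrow> nat \<Rightarrow> complex mat \<Rightarrow> complex mat
    \<Rightarrow> complex mat \<Rightarrow> bool" where
  "E0_mor n B T m C S F \<longleftrightarrow> F \<in> carrier_mat m n
     \<and> (\<forall>v \<in> carrier_vec n. \<forall>w \<in> carrier_vec n. bil C (F *\<^sub>v v) (F *\<^sub>v w) = bil B v w)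
     \<and> F * T * transpose_mat F = S"

definition E0_iso :: "nat \<Rightarrow> complex mat \<Rightarrow> complex mat \<Rightarrow> nat \<Rightarrow> complex mat \<Rightarrow> complex mat \<Rightarrow> bool" where
  "E0_iso n B T m C S \<longleftrightarrow> (\<exists>F G. E0_mor n B T m C S F \<and> E0_mor m C S n B T G
      \<and> G * F = 1\<^sub>m n \<and> F * G = 1\<^sub>m m)"

text \<open>Inflation (V',b',t') |> (V,b,t) = (V' + V, b' perp b, t + t'), on C^(n'+n)
with the V' coordinates first.\<close>
definition infl_form :: "nat \<Rightarrow> complex mat \<Rightarrow> nat \<Rightarrow> complex mat \<Rightarrow> complex mat" where
  "infl_form n' B' n B = four_block_mat B' (0\<^sub>m n' n) (0\<^sub>m n n') B"

definition infl_tensor :: "nat \<Rightarrow> complex mat \<Rightarrow> nat \<Rightarrow> complex mat \<Rightarrow> complex mat" where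
  "infl_tensor n' T' n T = four_block_mat T' (0\<^sub>m n' n) (0\<^sub>m n n') T"

text \<open>J_2^{perp m} on C^(2m): J_2(x,y) = x_1 y_2 on each consecutive pair of coordinates.\<close>
definition J2perp :: "nat \<Rightarrow> complex mat" where
  "J2perp m = mat (2*m) (2*m) (\<lambda>(i,j). if even i \<and> j = i + 1 then 1 else 0)"

end

theory Submission
  imports Defs "Jordan_Normal_Form.Jordan_Normal_Form_Existence"
begin

text \<open>Write \<open>t = \<Sum>\<^sub>i u\<^sub>i \<otimes> w\<^sub>i\<close> with \<open>u\<^sub>i \<in> R(b)\<close> and \<open>w\<^sub>i \<in> L(b)\<close>, i.e. \<open>T = U W\<^sup>T\<close> with
  \<open>B U = 0\<close> and \<open>B\<^sup>T W = 0\<close>, and let \<open>M = U\<^sup>T B W\<close> be the matrix of the pairings \<open>b(u\<^sub>i, w\<^sub>j)\<close>;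
  then \<open>b(t) = tr M = 1\<close>. The Fitting decomposition of \<open>M\<close>, read off from its Jordan normal form,
  changes the factorisation of \<open>t\<close> so that \<open>M\<close> becomes block diagonal, invertible on the first
  block and of trace \<open>0\<close> on the second. Normalising the first block gives \<open>x\<^sub>p \<in> R(b)\<close> and
  \<open>y\<^sub>p \<in> L(b)\<close> with \<open>b(x\<^sub>p, y\<^sub>q) = \<delta>\<^sub>p\<^sub>q\<close>, which span a copy of \<open>(\<Bbbk>\<^sup>2\<^sup>m, J\<^sub>2\<^sup>\<perp>\<^sup>m)\<close> carrying the
  invertible part of \<open>t\<close>; \<open>m > 0\<close> because that part has trace \<open>1\<close>. The rest of \<open>t\<close> lies in
  the \<open>b\<close>-orthogonal complement \<open>V'\<close> of the copy and has trace \<open>0\<close>, and \<open>V = V' \<oplus> \<Bbbk>\<^sup>2\<^sup>m\<close>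
  exhibits \<open>(V, b, t)\<close> as an inflation.\<close>

text \<open>Keeps numerals such as the column count \<open>1\<close> of \<open>carrier_mat n 1\<close> from turning into \<open>Suc 0\<close>.\<close>
declare One_nat_def [simp del]

lemma mult_assoc_dim:
  "dim_col A = dim_row B \<Longrightarrow> dim_col B = dim_row C \<Longrightarrow> A * B * C = A * (B * C)"
  by (rule assoc_mult_mat[of A "dim_row A" "dim_col A" B "dim_col B" C "dim_col C"]) auto

lemma mult_eq_assoc:
  "A * B = D \<Longrightarrow> dim_col A = dim_row B \<Longrightarrow> dim_col B = dim_row C \<Longrightarrow> A * (B * C) = D * C"
  using mult_assoc_dim by metis

lemma mult_eq_assoc3:
  "A * B * C = D \<Longrightarrow> dim_col A = dim_row B \<Longrightarrow> dim_col B = dim_row C \<Longrightarrow> dim_col C = dim_row E \<Longrightarrow>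
   A * (B * (C * E)) = D * E"
  by (simp add: mult_assoc_dim[symmetric])

lemma mult_add_distrib_dim:
  "dim_col (A :: 'a :: semiring_0 mat) = dim_row B \<Longrightarrow> dim_row B = dim_row C \<Longrightarrow>
   dim_col B = dim_col C \<Longrightarrow> A * (B + C) = A * B + A * C"
  by (rule mult_add_distrib_mat[of A "dim_row A" "dim_col A" B "dim_col B" C]) auto

lemma add_mult_distrib_dim:
  "dim_row (A :: 'a :: semiring_0 mat) = dim_row B \<Longrightarrow> dim_col A = dim_col B \<Longrightarrow>
   dim_col A = dim_row C \<Longrightarrow> (A + B) * C = A * C + B * C"
  by (rule add_mult_distrib_mat[of A "dim_row A" "dim_col A" B C "dim_col C"]) auto

lemma mult_minus_distrib_dim:
  "dim_col (A :: 'a :: ring mat) = dim_row B \<Longrightarrow> dim_row B = dim_row C \<Longrightarrow>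
   dim_col B = dim_col C \<Longrightarrow> A * (B - C) = A * B - A * C"
  by (rule mult_minus_distrib_mat[of A "dim_row A" "dim_col A" B "dim_col B" C]) auto

lemma minus_mult_distrib_dim:
  "dim_row (A :: 'a :: ring mat) = dim_row B \<Longrightarrow> dim_col A = dim_col B \<Longrightarrow>
   dim_col A = dim_row C \<Longrightarrow> (A - B) * C = A * C - B * C"
  by (rule minus_mult_distrib_mat[of A "dim_row A" "dim_col A" B C "dim_col C"]) auto

lemma transpose_mult_dim:
  "dim_col (A :: 'a :: comm_semiring_0 mat) = dim_row B \<Longrightarrow> (A * B)\<^sup>T = B\<^sup>T * A\<^sup>T"
  by (rule transpose_mult[of A "dim_row A" "dim_col A" B "dim_col B"]) auto

lemma transpose_add_dim:
  "dim_row (A :: 'a :: monoid_add mat) = dim_row B \<Longrightarrow> dim_col A = dim_col B \<Longrightarrow>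
   (A + B)\<^sup>T = A\<^sup>T + B\<^sup>T"
  by (intro eq_matI) auto

lemma add_zero_mat_dim [simp]:
  "dim_row A = nr \<Longrightarrow> dim_col A = nc \<Longrightarrow> A + 0\<^sub>m nr nc = (A :: 'a :: monoid_add mat)"
  "dim_row A = nr \<Longrightarrow> dim_col A = nc \<Longrightarrow> 0\<^sub>m nr nc + A = A"
  by (intro eq_matI; simp)+

lemma minus_zero_mat_dim [simp]:
  "dim_row A = nr \<Longrightarrow> dim_col A = nc \<Longrightarrow> A - 0\<^sub>m nr nc = (A :: 'a :: group_add mat)"
  by (intro eq_matI) auto

lemma minus_self_mat [simp]: "A - A = 0\<^sub>m (dim_row A) (dim_col (A :: 'a :: group_add mat))"
  by (intro eq_matI) auto

lemma minus_add_cancel_mat [simp]: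
  "dim_row A = dim_row C \<Longrightarrow> dim_col A = dim_col C \<Longrightarrow> A - C + C = (A :: 'a :: ab_group_add mat)"
  by (intro eq_matI) auto

lemma add_eq_imp_eq_minus_mat:
  assumes "A + B = C" "A \<in> carrier_mat nr nc" "B \<in> carrier_mat nr nc"
  shows "A = C - B" "B = C - (A :: 'a :: ab_group_add mat)"
  unfolding assms(1)[symmetric] using assms(2,3) by (intro eq_matI; simp)+

lemma mult_index_sum:
  "A \<in> carrier_mat nr n \<Longrightarrow> B \<in> carrier_mat n nc \<Longrightarrow> i < nr \<Longrightarrow> j < nc \<Longrightarrow>
   (A * B) $$ (i,j) = (\<Sum>l<n. A $$ (i,l) * B $$ (l,j))"
  by (auto simp: scalar_prod_def atLeast0LessThan intro!: sum.cong)

definition mat_trace :: "'a :: comm_semiring_0 mat \<Rightarrow> 'a" where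
  "mat_trace A = (\<Sum>i<dim_row A. A $$ (i,i))"

lemma mat_trace_mult_comm:
  assumes A: "A \<in> carrier_mat a b" and C: "C \<in> carrier_mat b a"
  shows "mat_trace (A * C) = mat_trace (C * A)"
proof -
  have "mat_trace (A * C) = (\<Sum>i<a. \<Sum>l<b. A $$ (i,l) * C $$ (l,i))"
    unfolding mat_trace_def using A by (auto intro!: sum.cong mult_index_sum[OF A C])
  also have "\<dots> = (\<Sum>l<b. \<Sum>i<a. C $$ (l,i) * A $$ (i,l))"
    by (subst sum.swap) (simp add: mult.commute)
  also have "\<dots> = mat_trace (C * A)"
    unfolding mat_trace_def using C by (auto intro!: sum.cong mult_index_sum[OF C A, symmetric])
  finally show ?thesis .
qed

lemma mat_trace_add:
  "A \<in> carrier_mat n n \<Longrightarrow> C \<in> carrier_mat n n \<Longrightarrow> mat_trace (A + C) = mat_trace A + mat_trace C"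
  unfolding mat_trace_def by (auto simp: sum.distrib)

lemma mat_trace_transpose: "A \<in> carrier_mat n n \<Longrightarrow> mat_trace A\<^sup>T = mat_trace A"
  unfolding mat_trace_def by auto

section \<open>Selection matrices and biproducts\<close>

definition select_mat :: "nat \<Rightarrow> (nat \<Rightarrow> nat) \<Rightarrow> nat \<Rightarrow> 'a :: zero_neq_one mat" where
  "select_mat N f m = mat N m (\<lambda>(i,j). if i = f j then 1 else 0)"

lemma select_mat_carrier [simp]:
  "select_mat N f m \<in> carrier_mat N m" "dim_row (select_mat N f m) = N" "dim_col (select_mat N f m) = m"
  unfolding select_mat_def by auto

lemma transpose_select_mat_mult:
  assumes "\<forall>p<m. f p < N"
  shows "(select_mat N f m)\<^sup>T * (select_mat N g m' :: 'a :: semiring_1 mat) =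
    mat m m' (\<lambda>(p,q). if f p = g q then 1 else 0)" (is "?L = ?R")
proof (rule eq_matI)
  fix p q assume "p < dim_row ?R" "q < dim_col ?R"
  then have pq: "p < m" "q < m'" by auto
  have "?L $$ (p,q) = (\<Sum>i<N. (select_mat N f m)\<^sup>T $$ (p,i) * (select_mat N g m' :: 'a mat) $$ (i,q))"
    using pq by (intro mult_index_sum) auto
  also have "\<dots> = (\<Sum>i<N. if i = f p then (if f p = g q then 1 else 0) else 0)"
    using pq by (intro sum.cong) (auto simp: select_mat_def)
  finally show "?L $$ (p,q) = ?R $$ (p,q)"
    using pq assms by simp
qed auto

lemma select_mat_mult_transpose:
  assumes "inj_on f {..<m}"
  shows "select_mat N f m * (select_mat N g m)\<^sup>T =
    (mat N N (\<lambda>(i,j). if \<exists>p<m. i = f p \<and> j = g p then 1 else 0) :: 'a :: semiring_1 mat)"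
    (is "?L = ?R")
proof (rule eq_matI)
  fix i j assume "i < dim_row ?R" "j < dim_col ?R"
  then have ij: "i < N" "j < N" by auto
  have "?L $$ (i,j) = (\<Sum>p<m. (select_mat N f m :: 'a mat) $$ (i,p) * (select_mat N g m)\<^sup>T $$ (p,j))"
    using ij by (intro mult_index_sum) auto
  also have "\<dots> = (\<Sum>p<m. if i = f p \<and> j = g p then 1 else 0)"
    using ij by (intro sum.cong) (auto simp: select_mat_def)
  also have "\<dots> = ?R $$ (i,j)"
  proof (cases "\<exists>p<m. i = f p")
    case True
    then obtain p0 where p0: "p0 < m" "i = f p0" by auto
    have "(\<Sum>p<m. if i = f p \<and> j = g p then 1 else (0::'a))
        = (\<Sum>p<m. if p = p0 then (if j = g p0 then 1 else 0) else 0)"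
      using p0 assms by (intro sum.cong) (auto dest: inj_onD)
    then show ?thesis using ij p0 assms by (auto dest: inj_onD)
  qed (use ij in auto)
  finally show "?L $$ (i,j) = ?R $$ (i,j)" .
qed auto

text \<open>A direct sum decomposition \<open>\<Bbbk>\<^sup>n = \<Bbbk>\<^sup>n\<^sup>1 \<oplus> \<Bbbk>\<^sup>n\<^sup>2\<close>: \<open>Z\<^sub>i\<close> are the injections, \<open>P\<^sub>i\<close> the projections.\<close>
definition is_biproduct ::
    "nat \<Rightarrow> nat \<Rightarrow> 'a :: semiring_1 mat \<Rightarrow> 'a mat \<Rightarrow> nat \<Rightarrow> 'a mat \<Rightarrow> 'a mat \<Rightarrow> bool" where
  "is_biproduct n n1 Z1 P1 n2 Z2 P2 \<longleftrightarrow>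
     Z1 \<in> carrier_mat n n1 \<and> P1 \<in> carrier_mat n1 n \<and> Z2 \<in> carrier_mat n n2 \<and> P2 \<in> carrier_mat n2 n \<and>
     P1 * Z1 = 1\<^sub>m n1 \<and> P2 * Z2 = 1\<^sub>m n2 \<and> P1 * Z2 = 0\<^sub>m n1 n2 \<and> P2 * Z1 = 0\<^sub>m n2 n1 \<and>
     Z1 * P1 + Z2 * P2 = 1\<^sub>m n"

lemma is_biproduct_commute:
  "is_biproduct n n1 Z1 P1 n2 Z2 P2 \<longleftrightarrow> is_biproduct n n2 Z2 P2 n1 Z1 P1"
proof -
  have "Z1 \<in> carrier_mat n n1 \<Longrightarrow> P1 \<in> carrier_mat n1 n \<Longrightarrow> Z2 \<in> carrier_mat n n2 \<Longrightarrow>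
      P2 \<in> carrier_mat n2 n \<Longrightarrow> Z1 * P1 + Z2 * P2 = Z2 * P2 + Z1 * P1"
    by (rule comm_add_mat) auto
  then show ?thesis unfolding is_biproduct_def by auto
qed

lemma is_biproduct_select_mat:
  assumes inj: "inj_on f {..<m1}" "inj_on g {..<m2}"
    and disj: "f ` {..<m1} \<inter> g ` {..<m2} = {}" and cover: "f ` {..<m1} \<union> g ` {..<m2} = {..<N}"
  shows "is_biproduct N m1 (select_mat N f m1) (select_mat N f m1)\<^sup>T
    m2 (select_mat N g m2) (select_mat N g m2)\<^sup>T"
proof -
  have f: "\<forall>p<m1. f p < N" and g: "\<forall>p<m2. g p < N" using cover by auto
  have "(select_mat N f m1)\<^sup>T * select_mat N f m1 = (1\<^sub>m m1 :: 'a mat)"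
    unfolding transpose_select_mat_mult[OF f] by (rule eq_matI) (use inj(1) in \<open>auto dest: inj_onD\<close>)
  moreover have "(select_mat N g m2)\<^sup>T * select_mat N g m2 = (1\<^sub>m m2 :: 'a mat)"
    unfolding transpose_select_mat_mult[OF g] by (rule eq_matI) (use inj(2) in \<open>auto dest: inj_onD\<close>)
  moreover have "(select_mat N f m1)\<^sup>T * select_mat N g m2 = (0\<^sub>m m1 m2 :: 'a mat)"
    unfolding transpose_select_mat_mult[OF f] by (rule eq_matI) (use disj in auto)
  moreover have "(select_mat N g m2)\<^sup>T * select_mat N f m1 = (0\<^sub>m m2 m1 :: 'a mat)"
    unfolding transpose_select_mat_mult[OF g] by (rule eq_matI) (use disj in auto)
  moreover have "select_mat N f m1 * (select_mat N f m1)\<^sup>T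
      + select_mat N g m2 * (select_mat N g m2)\<^sup>T = (1\<^sub>m N :: 'a mat)"
    unfolding select_mat_mult_transpose[OF inj(1)] select_mat_mult_transpose[OF inj(2)]
  proof (rule eq_matI)
    fix i j assume "i < dim_row (1\<^sub>m N :: 'a mat)" "j < dim_col (1\<^sub>m N :: 'a mat)"
    then have ij: "i < N" "j < N" by auto
    then consider "i \<in> f ` {..<m1}" "i \<notin> g ` {..<m2}" | "i \<in> g ` {..<m2}" "i \<notin> f ` {..<m1}"
      using cover disj by blast
    then show "(mat N N (\<lambda>(i,j). if \<exists>p<m1. i = f p \<and> j = f p then 1 else 0)
        + mat N N (\<lambda>(i,j). if \<exists>p<m2. i = g p \<and> j = g p then 1 else 0)) $$ (i,j) = (1\<^sub>m N :: 'a mat) $$ (i,j)"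
      using ij by cases auto
  qed auto
  ultimately show ?thesis unfolding is_biproduct_def by auto
qed

definition inl_mat :: "nat \<Rightarrow> nat \<Rightarrow> 'a :: zero_neq_one mat" where
  "inl_mat n1 n2 = select_mat (n1 + n2) (\<lambda>j. j) n1"

definition inr_mat :: "nat \<Rightarrow> nat \<Rightarrow> 'a :: zero_neq_one mat" where
  "inr_mat n1 n2 = select_mat (n1 + n2) (\<lambda>j. n1 + j) n2"

lemma inl_inr_mat_carrier [simp]:
  "inl_mat n1 n2 \<in> carrier_mat (n1 + n2) n1" "dim_row (inl_mat n1 n2) = n1 + n2" "dim_col (inl_mat n1 n2) = n1"
  "inr_mat n1 n2 \<in> carrier_mat (n1 + n2) n2" "dim_row (inr_mat n1 n2) = n1 + n2" "dim_col (inr_mat n1 n2) = n2"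
  unfolding inl_mat_def inr_mat_def by auto

lemma is_biproduct_inl_inr:
  "is_biproduct (n1 + n2) n1 (inl_mat n1 n2) (inl_mat n1 n2)\<^sup>T n2 (inr_mat n1 n2) (inr_mat n1 n2)\<^sup>T"
proof -
  have "i \<in> (\<lambda>j. j) ` {..<n1} \<union> (\<lambda>j. n1 + j) ` {..<n2}" if "i < n1 + n2" for i
  proof (cases "i < n1")
    case False
    then have "i \<in> (\<lambda>j. n1 + j) ` {..<n2}"
      using that by (intro image_eqI[of _ _ "i - n1"]) auto
    then show ?thesis by blast
  qed simp
  then have "(\<lambda>j. j) ` {..<n1} \<union> (\<lambda>j. n1 + j) ` {..<n2} = {..<n1 + n2}"
    by auto
  moreover have "(\<lambda>j. j) ` {..<n1} \<inter> (\<lambda>j. n1 + j) ` {..<n2} = {}"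
    by auto
  ultimately show ?thesis
    unfolding inl_mat_def inr_mat_def by (intro is_biproduct_select_mat) (simp_all add: inj_on_def)
qed

lemma index_inl_mat [simp]:
  "i < n1 + n2 \<Longrightarrow> j < n1 \<Longrightarrow> inl_mat n1 n2 $$ (i,j) = (if i = j then 1 else 0)"
  unfolding inl_mat_def select_mat_def by simp

lemma index_inr_mat [simp]:
  "i < n1 + n2 \<Longrightarrow> j < n2 \<Longrightarrow> inr_mat n1 n2 $$ (i,j) = (if i = n1 + j then 1 else 0)"
  unfolding inr_mat_def select_mat_def by simp

lemma inl_mat_conj_index:
  assumes A: "(A :: 'a :: semiring_1 mat) \<in> carrier_mat n1 n1" and ij: "i < n1 + n2" "j < n1 + n2"
  shows "(inl_mat n1 n2 * A * (inl_mat n1 n2)\<^sup>T) $$ (i,j) = (if i < n1 \<and> j < n1 then A $$ (i,j) else 0)"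
proof -
  have "(inl_mat n1 n2 * A) $$ (i,l) = (\<Sum>p<n1. (inl_mat n1 n2) $$ (i,p) * A $$ (p,l))" if "l < n1" for l
    using A ij that by (intro mult_index_sum) auto
  also have "\<dots> l = (\<Sum>p<n1. if p = i then A $$ (i,l) else 0)" for l
    using ij by (intro sum.cong) auto
  finally have row: "l < n1 \<Longrightarrow> (inl_mat n1 n2 * A) $$ (i,l) = (if i < n1 then A $$ (i,l) else 0)" for l
    by simp
  have "(inl_mat n1 n2 * A * (inl_mat n1 n2)\<^sup>T) $$ (i,j)
      = (\<Sum>l<n1. (inl_mat n1 n2 * A) $$ (i,l) * (inl_mat n1 n2)\<^sup>T $$ (l,j))"
    using A ij by (intro mult_index_sum) auto
  also have "\<dots> = (\<Sum>l<n1. if l = j then (if i < n1 then A $$ (i,j) else 0) else 0)"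
    using ij by (intro sum.cong) (auto simp: row simp del: index_mult_mat(1))
  finally show ?thesis by simp
qed

lemma inr_mat_conj_index:
  assumes A: "(A :: 'a :: semiring_1 mat) \<in> carrier_mat n2 n2" and ij: "i < n1 + n2" "j < n1 + n2"
  shows "(inr_mat n1 n2 * A * (inr_mat n1 n2)\<^sup>T) $$ (i,j) =
    (if n1 \<le> i \<and> n1 \<le> j then A $$ (i - n1, j - n1) else 0)"
proof -
  have "(inr_mat n1 n2 * A) $$ (i,l) = (\<Sum>p<n2. (inr_mat n1 n2) $$ (i,p) * A $$ (p,l))" if "l < n2" for l
    using A ij that by (intro mult_index_sum) auto
  also have "\<dots> l = (\<Sum>p<n2. if p = i - n1 then (if n1 \<le> i then A $$ (i - n1,l) else 0) else 0)" for l
    using ij by (intro sum.cong) auto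
  moreover have "n1 \<le> i \<Longrightarrow> i - n1 < n2"
    using ij by linarith
  ultimately have row: "l < n2 \<Longrightarrow> (inr_mat n1 n2 * A) $$ (i,l) = (if n1 \<le> i then A $$ (i - n1,l) else 0)" for l
    by auto
  have "(inr_mat n1 n2 * A * (inr_mat n1 n2)\<^sup>T) $$ (i,j)
      = (\<Sum>l<n2. (inr_mat n1 n2 * A) $$ (i,l) * (inr_mat n1 n2)\<^sup>T $$ (l,j))"
    using A ij by (intro mult_index_sum) auto
  also have "\<dots> = (\<Sum>l<n2. if l = j - n1 then (if n1 \<le> i \<and> n1 \<le> j then A $$ (i - n1, j - n1) else 0) else 0)"
    using ij by (intro sum.cong) (auto simp: row simp del: index_mult_mat(1))
  moreover have "n1 \<le> j \<Longrightarrow> j - n1 < n2"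
    using ij by linarith
  ultimately show ?thesis by auto
qed

lemma four_block_diag_eq:
  assumes A: "(A :: 'a :: semiring_1 mat) \<in> carrier_mat n1 n1" and D: "D \<in> carrier_mat n2 n2"
  shows "four_block_mat A (0\<^sub>m n1 n2) (0\<^sub>m n2 n1) D =
    inl_mat n1 n2 * A * (inl_mat n1 n2)\<^sup>T + inr_mat n1 n2 * D * (inr_mat n1 n2)\<^sup>T"
    (is "_ = ?L + ?R")
proof (rule eq_matI)
  fix i j assume "i < dim_row (?L + ?R)" "j < dim_col (?L + ?R)"
  then have ij: "i < n1 + n2" "j < n1 + n2" by simp_all
  have "(?L + ?R) $$ (i,j) = ?L $$ (i,j) + ?R $$ (i,j)"
    using ij by (intro index_add_mat) auto
  also have "\<dots> = (if i < n1 \<and> j < n1 then A $$ (i,j) else 0)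
      + (if n1 \<le> i \<and> n1 \<le> j then D $$ (i - n1, j - n1) else 0)"
    by (simp only: inl_mat_conj_index[OF A ij] inr_mat_conj_index[OF D ij])
  finally show "four_block_mat A (0\<^sub>m n1 n2) (0\<^sub>m n2 n1) D $$ (i,j) = (?L + ?R) $$ (i,j)"
    using A D ij by (cases "i < n1"; cases "j < n1") auto
qed (use A D in auto)

lemma biproduct_iso_inl_inr:
  fixes Z1 :: "'a :: comm_ring_1 mat"
  assumes "is_biproduct n n1 Z1 P1 n2 Z2 P2"
  defines "F \<equiv> inl_mat n1 n2 * P1 + inr_mat n1 n2 * P2"
    and "G \<equiv> Z1 * (inl_mat n1 n2)\<^sup>T + Z2 * (inr_mat n1 n2)\<^sup>T"
  shows "F \<in> carrier_mat (n1 + n2) n" "G \<in> carrier_mat n (n1 + n2)"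
    "G * F = 1\<^sub>m n" "F * G = 1\<^sub>m (n1 + n2)" "F * Z1 = inl_mat n1 n2" "F * Z2 = inr_mat n1 n2"
proof -
  from assms(1) have Z1: "Z1 \<in> carrier_mat n n1" and P1: "P1 \<in> carrier_mat n1 n"
    and Z2: "Z2 \<in> carrier_mat n n2" and P2: "P2 \<in> carrier_mat n2 n"
    and bp: "P1 * Z1 = 1\<^sub>m n1" "P2 * Z2 = 1\<^sub>m n2" "P1 * Z2 = 0\<^sub>m n1 n2" "P2 * Z1 = 0\<^sub>m n2 n1"
      "Z1 * P1 + Z2 * P2 = 1\<^sub>m n"
    unfolding is_biproduct_def by auto
  let ?l = "inl_mat n1 n2 :: 'a mat" and ?r = "inr_mat n1 n2 :: 'a mat"
  have lr: "?l\<^sup>T * ?l = 1\<^sub>m n1" "?r\<^sup>T * ?r = 1\<^sub>m n2" "?l\<^sup>T * ?r = 0\<^sub>m n1 n2" "?r\<^sup>T * ?l = 0\<^sub>m n2 n1"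
    "?l * ?l\<^sup>T + ?r * ?r\<^sup>T = 1\<^sub>m (n1 + n2)"
    using is_biproduct_inl_inr[of n1 n2] unfolding is_biproduct_def by blast+
  note [simp] = carrier_matD[OF Z1] carrier_matD[OF P1] carrier_matD[OF Z2] carrier_matD[OF P2]
  show F: "F \<in> carrier_mat (n1 + n2) n" and G: "G \<in> carrier_mat n (n1 + n2)"
    unfolding F_def G_def by auto
  note [simp] = carrier_matD[OF F] carrier_matD[OF G]
  show FZ1: "F * Z1 = ?l" and FZ2: "F * Z2 = ?r"
    unfolding F_def by (simp_all add: add_mult_distrib_dim mult_assoc_dim bp)
  have "G * F = Z1 * P1 + Z2 * P2"
    unfolding F_def G_def
    by (simp add: add_mult_distrib_dim mult_add_distrib_dim mult_assoc_dim
        mult_eq_assoc[OF lr(1)] mult_eq_assoc[OF lr(2)] mult_eq_assoc[OF lr(3)] mult_eq_assoc[OF lr(4)])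
  then show "G * F = 1\<^sub>m n" by (simp add: bp(5))
  show "F * G = 1\<^sub>m (n1 + n2)"
    unfolding G_def by (simp add: mult_add_distrib_dim mult_assoc_dim[symmetric] FZ1 FZ2 lr)
qed

section \<open>Rank factorization of idempotents\<close>

lemma mult_select_mat_col_index:
  assumes "(A :: 'a :: semiring_1 mat) \<in> carrier_mat nr n" "i < nr" "j < n"
  shows "(A * select_mat n (\<lambda>_. j) 1) $$ (i,0) = A $$ (i,j)"
proof -
  have "(A * select_mat n (\<lambda>_. j) 1) $$ (i,0) = (\<Sum>l<n. A $$ (i,l) * select_mat n (\<lambda>_. j) 1 $$ (l,0))"
    using assms by (intro mult_index_sum) auto
  also have "\<dots> = (\<Sum>l<n. if l = j then A $$ (i,j) else 0)"
    by (intro sum.cong) (auto simp: select_mat_def)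
  finally show ?thesis using assms by simp
qed

lemma mult_unit_col_eq_zero_iff:
  assumes A: "(A :: 'a :: semiring_1 mat) \<in> carrier_mat nr n" and j: "j < n"
  shows "A * select_mat n (\<lambda>_. j) 1 = 0\<^sub>m nr 1 \<longleftrightarrow> (\<forall>i<nr. A $$ (i,j) = 0)"
proof
  assume zero: "A * select_mat n (\<lambda>_. j) 1 = 0\<^sub>m nr 1"
  show "\<forall>i<nr. A $$ (i,j) = 0"
  proof (intro allI impI)
    fix i assume i: "i < nr"
    have "A $$ (i,j) = (A * select_mat n (\<lambda>_. j) 1) $$ (i,0)"
      by (rule mult_select_mat_col_index[OF A i j, symmetric])
    also have "\<dots> = 0" unfolding zero using i by simp
    finally show "A $$ (i,j) = 0" .
  qed
next
  assume "\<forall>i<nr. A $$ (i,j) = 0"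
  then show "A * select_mat n (\<lambda>_. j) 1 = 0\<^sub>m nr 1"
    using A by (intro eq_matI) (auto simp: mult_select_mat_col_index[OF A _ j] simp del: index_mult_mat(1))
qed

lemma idempotent_rank_one_split:
  fixes Y :: "'a :: field mat" and n :: nat
  defines "e \<equiv> \<lambda>i. select_mat n (\<lambda>_. i) 1 :: 'a mat"
  assumes Y: "Y \<in> carrier_mat n n" and YY: "Y * Y = Y" and j: "j < n" and nz: "Y * e j \<noteq> 0\<^sub>m n 1"
  obtains z \<phi> where "z \<in> carrier_mat n 1" "\<phi> \<in> carrier_mat 1 n" "Y * z = z" "\<phi> * Y = \<phi>" "\<phi> * z = 1\<^sub>m 1"
    "(Y - z * \<phi>) * e j = 0\<^sub>m n 1" "\<And>i. Y * e i = 0\<^sub>m n 1 \<Longrightarrow> (Y - z * \<phi>) * e i = 0\<^sub>m n 1"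
proof -
  have e: "e i \<in> carrier_mat n 1" for i unfolding e_def by simp
  note [simp] = carrier_matD[OF Y] carrier_matD[OF e]
  obtain a where a: "a < n" and c: "Y $$ (a,j) \<noteq> 0"
    using nz mult_unit_col_eq_zero_iff[OF Y j] unfolding e_def by auto
  define z where "z = Y * e j"
  define u :: "'a mat" where "u = mat 1 n (\<lambda>(_,l). if l = a then inverse (Y $$ (a,j)) else 0)"
  define \<phi> where "\<phi> = u * Y"
  have z: "z \<in> carrier_mat n 1" and u: "u \<in> carrier_mat 1 n" and \<phi>: "\<phi> \<in> carrier_mat 1 n"
    unfolding z_def u_def \<phi>_def by auto
  note [simp] = carrier_matD[OF z] carrier_matD[OF u] carrier_matD[OF \<phi>]
  have Yz: "Y * z = z" unfolding z_def by (simp add: mult_assoc_dim[symmetric] YY)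
  have \<phi>Y: "\<phi> * Y = \<phi>" unfolding \<phi>_def by (simp add: mult_assoc_dim YY)
  have uz: "u * z = 1\<^sub>m 1"
  proof (rule eq_matI)
    fix p q assume "p < dim_row (1\<^sub>m 1 :: 'a mat)" "q < dim_col (1\<^sub>m 1 :: 'a mat)"
    then have pq: "p = 0" "q = 0" by auto
    have "(u * z) $$ (0,0) = (\<Sum>l<n. u $$ (0,l) * z $$ (l,0))"
      by (intro mult_index_sum[OF u z]) auto
    also have "\<dots> = (\<Sum>l<n. if l = a then inverse (Y $$ (a,j)) * z $$ (a,0) else 0)"
      by (intro sum.cong) (auto simp: u_def)
    also have "\<dots> = 1"
      using a c by (simp add: z_def e_def mult_select_mat_col_index[OF Y a j] del: index_mult_mat(1))
    finally show "(u * z) $$ (p,q) = 1\<^sub>m 1 $$ (p,q)" using pq by simp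
  qed auto
  have \<phi>z: "\<phi> * z = 1\<^sub>m 1" unfolding \<phi>_def by (simp add: mult_assoc_dim Yz uz)
  have \<phi>e: "\<phi> * e j = \<phi> * z"
    unfolding z_def by (simp add: mult_assoc_dim[symmetric] \<phi>Y)
  have "(Y - z * \<phi>) * e j = Y * e j - z * (\<phi> * e j)"
    by (simp add: minus_mult_distrib_dim mult_assoc_dim)
  then have col_j: "(Y - z * \<phi>) * e j = 0\<^sub>m n 1"
    unfolding \<phi>e z_def[symmetric] by (simp add: \<phi>z)
  have "(Y - z * \<phi>) * e i = 0\<^sub>m n 1" if "Y * e i = 0\<^sub>m n 1" for i
  proof -
    have "(Y - z * \<phi>) * e i = Y * e i - z * (u * (Y * e i))"
      by (simp add: minus_mult_distrib_dim mult_assoc_dim \<phi>_def)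
    then show ?thesis by (simp add: that)
  qed
  with that z \<phi> Yz \<phi>Y \<phi>z col_j show thesis by blast
qed

lemma rank_factorization_extend:
  fixes Y :: "'a :: field mat"
  assumes Y: "Y \<in> carrier_mat n n" and z: "z \<in> carrier_mat n 1" and \<phi>: "\<phi> \<in> carrier_mat 1 n"
    and Yz: "Y * z = z" and \<phi>Y: "\<phi> * Y = \<phi>" and \<phi>z: "\<phi> * z = 1\<^sub>m 1"
    and Z': "Z' \<in> carrier_mat n r" and P': "P' \<in> carrier_mat r n"
    and P'Z': "P' * Z' = 1\<^sub>m r" and Z'P': "Z' * P' = Y - z * \<phi>"
  shows "\<exists>Z P. Z \<in> carrier_mat n (r + 1) \<and> P \<in> carrier_mat (r + 1) n \<and> P * Z = 1\<^sub>m (r + 1) \<and> Z * P = Y"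
proof -
  note [simp] = carrier_matD[OF Y] carrier_matD[OF z] carrier_matD[OF \<phi>]
    carrier_matD[OF Z'] carrier_matD[OF P']
  have "P' * z = P' * ((Y - z * \<phi>) * z)"
    by (simp add: Z'P'[symmetric] mult_assoc_dim[symmetric] P'Z')
  also have "(Y - z * \<phi>) * z = 0\<^sub>m n 1"
    by (simp add: minus_mult_distrib_dim mult_assoc_dim Yz \<phi>z)
  finally have P'z: "P' * z = 0\<^sub>m r 1" by simp
  have "\<phi> * Z' = (\<phi> * (Y - z * \<phi>)) * Z'"
    by (simp add: Z'P'[symmetric] mult_assoc_dim P'Z')
  also have "\<phi> * (Y - z * \<phi>) = 0\<^sub>m 1 n"
    by (simp add: mult_minus_distrib_dim \<phi>Y mult_assoc_dim[symmetric] \<phi>z)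
  finally have \<phi>Z': "\<phi> * Z' = 0\<^sub>m 1 r" by simp
  let ?l = "inl_mat r 1 :: 'a mat" and ?r = "inr_mat r 1 :: 'a mat"
  have lr: "?l\<^sup>T * ?l = 1\<^sub>m r" "?r\<^sup>T * ?r = 1\<^sub>m 1" "?l\<^sup>T * ?r = 0\<^sub>m r 1" "?r\<^sup>T * ?l = 0\<^sub>m 1 r"
    "?l * ?l\<^sup>T + ?r * ?r\<^sup>T = 1\<^sub>m (r + 1)"
    using is_biproduct_inl_inr[of r 1] unfolding is_biproduct_def by blast+
  define Z where "Z = Z' * ?l\<^sup>T + z * ?r\<^sup>T"
  define P where "P = ?l * P' + ?r * \<phi>"
  have "P * Z = 1\<^sub>m (r + 1)"
    unfolding P_def Z_def
    by (simp add: add_mult_distrib_dim mult_add_distrib_dim mult_assoc_dim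
        mult_eq_assoc[OF P'Z'] mult_eq_assoc[OF P'z] mult_eq_assoc[OF \<phi>Z'] mult_eq_assoc[OF \<phi>z] lr)
  moreover have "Z * P = Y"
    unfolding P_def Z_def
    by (simp add: add_mult_distrib_dim mult_add_distrib_dim mult_assoc_dim lr
        mult_eq_assoc[OF lr(1)] mult_eq_assoc[OF lr(2)] mult_eq_assoc[OF lr(3)] mult_eq_assoc[OF lr(4)]
        mult_assoc_dim[symmetric, of Z' P'] mult_assoc_dim[symmetric, of z \<phi>] Z'P')
  moreover have "Z \<in> carrier_mat n (r + 1)" "P \<in> carrier_mat (r + 1) n"
    unfolding Z_def P_def by auto
  ultimately show ?thesis by blast
qed

lemma idempotent_rank_factorization:
  fixes Y :: "'a :: field mat"
  assumes "Y \<in> carrier_mat n n" and "Y * Y = Y"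
  obtains r Z P where "Z \<in> carrier_mat n r" "P \<in> carrier_mat r n" "P * Z = 1\<^sub>m r" "Z * P = Y"
proof -
  define e where "e i = (select_mat n (\<lambda>_. i) 1 :: 'a mat)" for i
  define supp where "supp Y = {j. j < n \<and> Y * e j \<noteq> 0\<^sub>m n 1}" for Y
  have "\<exists>r Z P. Z \<in> carrier_mat n r \<and> P \<in> carrier_mat r n \<and> P * Z = 1\<^sub>m r \<and> Z * P = Y"
    if "card (supp Y) = N" "Y \<in> carrier_mat n n" "Y * Y = Y" for N Y
    using that
  proof (induction N arbitrary: Y rule: less_induct)
    case (less N)
    note Y = \<open>Y \<in> carrier_mat n n\<close> and YY = \<open>Y * Y = Y\<close>
    show ?case
    proof (cases "supp Y = {}")
      case True
      have "Y = 0\<^sub>m n n"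
      proof (rule eq_matI)
        fix i j assume "i < dim_row (0\<^sub>m n n :: 'a mat)" "j < dim_col (0\<^sub>m n n :: 'a mat)"
        then show "Y $$ (i,j) = 0\<^sub>m n n $$ (i,j)"
          using True mult_unit_col_eq_zero_iff[OF Y, of j] by (auto simp: supp_def e_def)
      qed (use Y in auto)
      then show ?thesis by (intro exI[of _ 0] exI[of _ "0\<^sub>m n 0"] exI[of _ "0\<^sub>m 0 n"]) auto
    next
      case False
      then obtain j where j: "j < n" "Y * e j \<noteq> 0\<^sub>m n 1" by (auto simp: supp_def)
      obtain z \<phi> where z: "z \<in> carrier_mat n 1" and \<phi>: "\<phi> \<in> carrier_mat 1 n"
        and Yz: "Y * z = z" and \<phi>Y: "\<phi> * Y = \<phi>" and \<phi>z: "\<phi> * z = 1\<^sub>m 1"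
        and col_j: "(Y - z * \<phi>) * e j = 0\<^sub>m n 1"
        and cols: "\<And>i. Y * e i = 0\<^sub>m n 1 \<Longrightarrow> (Y - z * \<phi>) * e i = 0\<^sub>m n 1"
        using idempotent_rank_one_split[OF Y YY j[unfolded e_def]] unfolding e_def by metis
      note [simp] = carrier_matD[OF Y] carrier_matD[OF z] carrier_matD[OF \<phi>]
      define Y' where "Y' = Y - z * \<phi>"
      have Y': "Y' \<in> carrier_mat n n" unfolding Y'_def by auto
      have Y'Y': "Y' * Y' = Y'"
        unfolding Y'_def
        by (simp add: minus_mult_distrib_dim mult_minus_distrib_dim mult_assoc_dim YY Yz \<phi>Y
            mult_eq_assoc[OF \<phi>z] mult_eq_assoc[OF Yz])
      have "supp Y' \<subset> supp Y"
        using cols col_j j by (auto simp: supp_def Y'_def)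
      moreover have "finite (supp Y)" unfolding supp_def by auto
      ultimately have "card (supp Y') < N"
        using less.prems(1) psubset_card_mono by blast
      from less.IH[OF this refl Y' Y'Y'] obtain r Z' P' where "Z' \<in> carrier_mat n r"
        "P' \<in> carrier_mat r n" "P' * Z' = 1\<^sub>m r" "Z' * P' = Y - z * \<phi>"
        unfolding Y'_def by blast
      then show ?thesis by (intro exI[of _ "r + 1"] rank_factorization_extend[OF Y z \<phi> Yz \<phi>Y \<phi>z])
    qed
  qed
  with assms that show thesis by blast
qed

lemma biproduct_complement:
  fixes Z2 :: "'a :: field mat"
  assumes Z2: "Z2 \<in> carrier_mat n n2" and P2: "P2 \<in> carrier_mat n2 n" and P2Z2: "P2 * Z2 = 1\<^sub>m n2"
  obtains n1 Z1 P1 where "is_biproduct n n1 Z1 P1 n2 Z2 P2"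
proof -
  note [simp] = carrier_matD[OF Z2] carrier_matD[OF P2]
  define Y where "Y = 1\<^sub>m n - Z2 * P2"
  have Y: "Y \<in> carrier_mat n n" unfolding Y_def by auto
  have YY: "Y * Y = Y"
    unfolding Y_def by (simp add: minus_mult_distrib_dim mult_minus_distrib_dim mult_assoc_dim
        mult_eq_assoc[OF P2Z2])
  obtain n1 Z1 P1 where Z1: "Z1 \<in> carrier_mat n n1" and P1: "P1 \<in> carrier_mat n1 n"
    and P1Z1: "P1 * Z1 = 1\<^sub>m n1" and Z1P1: "Z1 * P1 = Y"
    by (rule idempotent_rank_factorization[OF Y YY])
  note [simp] = carrier_matD[OF Z1] carrier_matD[OF P1]
  have "P1 * Z2 = P1 * (Y * Z2)"
    by (simp add: Z1P1[symmetric] mult_assoc_dim[symmetric] P1Z1)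
  also have "Y * Z2 = 0\<^sub>m n n2"
    unfolding Y_def by (simp add: minus_mult_distrib_dim mult_assoc_dim P2Z2)
  finally have P1Z2: "P1 * Z2 = 0\<^sub>m n1 n2" by simp
  have "P2 * Z1 = (P2 * Y) * Z1"
    by (simp add: Z1P1[symmetric] mult_assoc_dim P1Z1)
  also have "P2 * Y = 0\<^sub>m n2 n"
    unfolding Y_def by (simp add: mult_minus_distrib_dim mult_assoc_dim[symmetric] P2Z2)
  finally have P2Z1: "P2 * Z1 = 0\<^sub>m n2 n1" by simp
  have "Z1 * P1 + Z2 * P2 = 1\<^sub>m n"
    unfolding Z1P1 Y_def by simp
  with Z1 P1 Z2 P2 P1Z1 P2Z2 P1Z2 P2Z1 that show thesis
    unfolding is_biproduct_def by blast
qed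

section \<open>Tensors with factors in the radicals\<close>

lemma scalar_prod_all_zero_iff:
  assumes "(x :: 'a :: semiring_1 vec) \<in> carrier_vec n"
  shows "(\<forall>w \<in> carrier_vec n. x \<bullet> w = 0) \<longleftrightarrow> x = 0\<^sub>v n"
proof
  assume "\<forall>w \<in> carrier_vec n. x \<bullet> w = 0"
  then have "x \<bullet> unit_vec n i = 0" for i
    using unit_vec_carrier by blast
  then have "x $ i = 0" if "i < n" for i
    using scalar_prod_right_unit[OF that, of x] by simp
  then show "x = 0\<^sub>v n" using assms by (intro eq_vecI) auto
qed auto

lemma Rrad_iff:
  assumes B: "B \<in> carrier_mat n n"
  shows "v \<in> Rrad n B \<longleftrightarrow> v \<in> carrier_vec n \<and> B *\<^sub>v v = 0\<^sub>v n"
proof -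
  have "bil B w v = (B *\<^sub>v v) \<bullet> w" if "v \<in> carrier_vec n" "w \<in> carrier_vec n" for v w
    unfolding bil_def using B that by (intro comm_scalar_prod) auto
  then show ?thesis
    unfolding Rrad_def using scalar_prod_all_zero_iff[of "B *\<^sub>v v" n] B by auto
qed

lemma Lrad_iff:
  assumes B: "B \<in> carrier_mat n n"
  shows "v \<in> Lrad n B \<longleftrightarrow> v \<in> carrier_vec n \<and> B\<^sup>T *\<^sub>v v = 0\<^sub>v n"
proof -
  have "bil B v w = (B\<^sup>T *\<^sub>v v) \<bullet> w" if "v \<in> carrier_vec n" "w \<in> carrier_vec n" for v w
    unfolding bil_def using transpose_vec_mult_scalar[OF B that(2,1)] by simp
  then show ?thesis
    unfolding Lrad_def using scalar_prod_all_zero_iff[of "B\<^sup>T *\<^sub>v v" n] B by auto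
qed

lemma mult_eq_zero_iff_cols:
  assumes A: "A \<in> carrier_mat nr n" and U: "U \<in> carrier_mat n k"
  shows "A * U = 0\<^sub>m nr k \<longleftrightarrow> (\<forall>i<k. A *\<^sub>v col U i = 0\<^sub>v nr)"
proof -
  have "col (A * U) i = A *\<^sub>v col U i" if "i < k" for i
    by (rule col_mult2[OF A U that])
  moreover have "A * U = 0\<^sub>m nr k \<longleftrightarrow> (\<forall>i<k. col (A * U) i = col (0\<^sub>m nr k) i)"
  proof
    assume "\<forall>i<k. col (A * U) i = col (0\<^sub>m nr k) i"
    then show "A * U = 0\<^sub>m nr k" using A U by (intro mat_col_eqI) auto
  qed simp
  ultimately show ?thesis by auto
qed

lemma outer_product_sum_eq_mult:
  assumes U: "U \<in> carrier_mat n k" and W: "W \<in> carrier_mat n k"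
  shows "mat n n (\<lambda>(a, c). \<Sum>i<k. col U i $ a * col W i $ c) = U * (W\<^sup>T :: 'a :: comm_semiring_0 mat)"
proof (rule eq_matI)
  fix a c assume "a < dim_row (U * W\<^sup>T)" "c < dim_col (U * W\<^sup>T)"
  then have ac: "a < n" "c < n" using U W by auto
  have "(U * W\<^sup>T) $$ (a,c) = (\<Sum>i<k. U $$ (a,i) * W\<^sup>T $$ (i,c))"
    using U W ac by (intro mult_index_sum) auto
  then show "mat n n (\<lambda>(a, c). \<Sum>i<k. col U i $ a * col W i $ c) $$ (a,c) = (U * W\<^sup>T) $$ (a,c)"
    using U W ac by simp
qed (use U W in auto)

lemma tensor_in_iff_factor:
  assumes "R \<subseteq> carrier_vec n" and "L \<subseteq> carrier_vec n"
  shows "tensor_in n T R L \<longleftrightarrow> (\<exists>k U W. U \<in> carrier_mat n k \<and> W \<in> carrier_mat n k \<and>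
    T = U * W\<^sup>T \<and> (\<forall>i<k. col U i \<in> R \<and> col W i \<in> L))"
proof
  assume "tensor_in n T R L"
  then obtain k :: nat and us ws where uw: "\<forall>i<k. us i \<in> R \<and> ws i \<in> L"
    and T: "T = mat n n (\<lambda>(a, c). \<Sum>i<k. us i $ a * ws i $ c)"
    unfolding tensor_in_def by blast
  define U where "U = mat n k (\<lambda>(a,i). us i $ a)"
  define W where "W = mat n k (\<lambda>(a,i). ws i $ a)"
  have U: "U \<in> carrier_mat n k" and W: "W \<in> carrier_mat n k" unfolding U_def W_def by auto
  have cols: "col U i = us i" "col W i = ws i" if "i < k" for i
    using uw that assms unfolding U_def W_def by (auto simp: vec_eq_iff)
  have "T = U * W\<^sup>T"
    unfolding T outer_product_sum_eq_mult[OF U W, symmetric]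
    by (rule eq_matI) (auto simp: cols intro!: sum.cong)
  then show "\<exists>k U W. U \<in> carrier_mat n k \<and> W \<in> carrier_mat n k \<and>
    T = U * W\<^sup>T \<and> (\<forall>i<k. col U i \<in> R \<and> col W i \<in> L)"
    by (intro exI[of _ k] exI[of _ U] exI[of _ W]) (use U W uw cols in auto)
next
  assume "\<exists>k U W. U \<in> carrier_mat n k \<and> W \<in> carrier_mat n k \<and>
    T = U * W\<^sup>T \<and> (\<forall>i<k. col U i \<in> R \<and> col W i \<in> L)"
  then obtain k U W where U: "U \<in> carrier_mat n k" and W: "W \<in> carrier_mat n k"
    and T: "T = U * W\<^sup>T" and cols: "\<forall>i<k. col U i \<in> R \<and> col W i \<in> L" by blast
  show "tensor_in n T R L"
    unfolding tensor_in_def T outer_product_sum_eq_mult[OF U W, symmetric]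
    by (intro exI[of _ k] exI[of _ "\<lambda>i. col U i"] exI[of _ "\<lambda>i. col W i"]) (simp add: cols)
qed

definition radical_factors :: "nat \<Rightarrow> complex mat \<Rightarrow> nat \<Rightarrow> complex mat \<Rightarrow> complex mat \<Rightarrow> bool" where
  "radical_factors n B k U W \<longleftrightarrow>
     U \<in> carrier_mat n k \<and> W \<in> carrier_mat n k \<and> B * U = 0\<^sub>m n k \<and> B\<^sup>T * W = 0\<^sub>m n k"

lemma tensor_in_radicals_iff:
  assumes B: "B \<in> carrier_mat n n"
  shows "tensor_in n T (Rrad n B) (Lrad n B) \<longleftrightarrow> (\<exists>k U W. radical_factors n B k U W \<and> T = U * W\<^sup>T)"
proof -
  have Bt: "B\<^sup>T \<in> carrier_mat n n" using B by simp
  have cols: "(\<forall>i<k. col U i \<in> Rrad n B \<and> col W i \<in> Lrad n B) \<longleftrightarrow> radical_factors n B k U W"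
    if "U \<in> carrier_mat n k" "W \<in> carrier_mat n k" for k U W
    using that unfolding radical_factors_def mult_eq_zero_iff_cols[OF B that(1)]
      mult_eq_zero_iff_cols[OF Bt that(2)] Rrad_iff[OF B] Lrad_iff[OF B] by auto
  have "Rrad n B \<subseteq> carrier_vec n" "Lrad n B \<subseteq> carrier_vec n"
    unfolding Rrad_def Lrad_def by auto
  note factor = tensor_in_iff_factor[OF this]
  show ?thesis
  proof
    assume "tensor_in n T (Rrad n B) (Lrad n B)"
    then obtain k U W where "U \<in> carrier_mat n k" "W \<in> carrier_mat n k" "T = U * W\<^sup>T"
      "\<forall>i<k. col U i \<in> Rrad n B \<and> col W i \<in> Lrad n B"
      unfolding factor by blast
    with cols show "\<exists>k U W. radical_factors n B k U W \<and> T = U * W\<^sup>T" by blast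
  next
    assume "\<exists>k U W. radical_factors n B k U W \<and> T = U * W\<^sup>T"
    then obtain k U W where "radical_factors n B k U W" "T = U * W\<^sup>T" by blast
    with cols show "tensor_in n T (Rrad n B) (Lrad n B)"
      unfolding factor radical_factors_def by blast
  qed
qed

lemma tensor_in_radicals_factor:
  "B \<in> carrier_mat n n \<Longrightarrow> radical_factors n B k U W \<Longrightarrow> tensor_in n (U * W\<^sup>T) (Rrad n B) (Lrad n B)"
  using tensor_in_radicals_iff by blast

lemma eval_tensor_eq_mat_trace:
  assumes B: "B \<in> carrier_mat n n" and T: "T \<in> carrier_mat n n"
  shows "eval_tensor n B T = mat_trace (B\<^sup>T * T)"
proof -
  have "(B\<^sup>T * T) $$ (i,i) = (\<Sum>l<n. B\<^sup>T $$ (i,l) * T $$ (l,i))" if "i < n" for i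
    using B T that by (intro mult_index_sum) auto
  then have "mat_trace (B\<^sup>T * T) = (\<Sum>i<n. \<Sum>l<n. B\<^sup>T $$ (i,l) * T $$ (l,i))"
    unfolding mat_trace_def using B by simp
  also have "\<dots> = (\<Sum>i<n. \<Sum>l<n. B $$ (l,i) * T $$ (l,i))"
    using B by (intro sum.cong) auto
  also have "\<dots> = eval_tensor n B T"
    unfolding eval_tensor_def by (rule sum.swap)
  finally show ?thesis ..
qed

lemma eval_tensor_factor:
  assumes B: "B \<in> carrier_mat n n" and U: "U \<in> carrier_mat n k" and W: "W \<in> carrier_mat n k"
  shows "eval_tensor n B (U * W\<^sup>T) = mat_trace (U\<^sup>T * B * W)"
proof -
  note [simp] = carrier_matD[OF B] carrier_matD[OF U] carrier_matD[OF W]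
  have UW: "U * W\<^sup>T \<in> carrier_mat n n" and M: "U\<^sup>T * B * W \<in> carrier_mat k k" by auto
  have "eval_tensor n B (U * W\<^sup>T) = mat_trace ((B\<^sup>T * U) * W\<^sup>T)"
    by (simp add: eval_tensor_eq_mat_trace[OF B UW] mult_assoc_dim)
  also have "\<dots> = mat_trace (W\<^sup>T * (B\<^sup>T * U))"
    by (rule mat_trace_mult_comm[of _ n k]) auto
  also have "W\<^sup>T * (B\<^sup>T * U) = (U\<^sup>T * B * W)\<^sup>T"
    by (simp add: transpose_mult_dim mult_assoc_dim)
  finally show ?thesis by (simp add: mat_trace_transpose[OF M])
qed

lemma bil_mult_mat_vec:
  assumes F: "F \<in> carrier_mat m n" and C: "C \<in> carrier_mat m m"
    and v: "v \<in> carrier_vec n" and w: "w \<in> carrier_vec n"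
  shows "bil C (F *\<^sub>v v) (F *\<^sub>v w) = bil (F\<^sup>T * C * F) v w"
proof -
  have "(F *\<^sub>v v) \<bullet> (C *\<^sub>v (F *\<^sub>v w)) = v \<bullet> (F\<^sup>T *\<^sub>v (C *\<^sub>v (F *\<^sub>v w)))"
    using transpose_vec_mult_scalar[of "F\<^sup>T" n m "C *\<^sub>v (F *\<^sub>v w)" v] F C v w by auto
  moreover have "(F\<^sup>T * C * F) *\<^sub>v w = (F\<^sup>T * C) *\<^sub>v (F *\<^sub>v w)"
    by (rule assoc_mult_mat_vec) (use F C w in auto)
  moreover have "(F\<^sup>T * C) *\<^sub>v (F *\<^sub>v w) = F\<^sup>T *\<^sub>v (C *\<^sub>v (F *\<^sub>v w))"
    by (rule assoc_mult_mat_vec) (use F C w in auto)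
  ultimately show ?thesis unfolding bil_def by simp
qed

lemma E0_iso_of_congruence:
  assumes B: "B \<in> carrier_mat n n" and T: "T \<in> carrier_mat n n"
    and F: "F \<in> carrier_mat m n" and G: "G \<in> carrier_mat n m"
    and GF: "G * F = 1\<^sub>m n" and FG: "F * G = 1\<^sub>m m"
    and C: "G\<^sup>T * B * G = C" and S: "F * T * F\<^sup>T = S"
  shows "E0_iso n B T m C S"
proof -
  note [simp] = carrier_matD[OF B] carrier_matD[OF T] carrier_matD[OF F] carrier_matD[OF G]
  have C': "C \<in> carrier_mat m m" unfolding C[symmetric] by auto
  have "F\<^sup>T * C * F = (G * F)\<^sup>T * B * (G * F)"
    unfolding C[symmetric] by (simp add: transpose_mult_dim mult_assoc_dim)
  then have FCF: "F\<^sup>T * C * F = B" unfolding GF by simp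
  have "G * S * G\<^sup>T = (G * F) * T * (G * F)\<^sup>T"
    unfolding S[symmetric] by (simp add: transpose_mult_dim mult_assoc_dim)
  then have GSG: "G * S * G\<^sup>T = T" unfolding GF by simp
  have "E0_mor n B T m C S F"
    unfolding E0_mor_def using F S bil_mult_mat_vec[OF F C'] by (simp add: FCF)
  moreover have "E0_mor m C S n B T G"
    unfolding E0_mor_def using G GSG bil_mult_mat_vec[OF G B] by (simp add: C)
  ultimately show ?thesis unfolding E0_iso_def using GF FG by blast
qed

lemma E0_iso_inflation:
  assumes bp: "is_biproduct n n1 Z1 P1 n2 Z2 P2" and B: "B \<in> carrier_mat n n"
    and orth: "Z1\<^sup>T * B * Z2 = 0\<^sub>m n1 n2" "Z2\<^sup>T * B * Z1 = 0\<^sub>m n2 n1"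
    and T1: "T1 \<in> carrier_mat n1 n1" and T2: "T2 \<in> carrier_mat n2 n2"
    and T: "T = Z1 * T1 * Z1\<^sup>T + Z2 * T2 * Z2\<^sup>T"
  shows "E0_iso n B T (n1 + n2) (infl_form n1 (Z1\<^sup>T * B * Z1) n2 (Z2\<^sup>T * B * Z2)) (infl_tensor n1 T1 n2 T2)"
proof -
  define F where "F = inl_mat n1 n2 * P1 + inr_mat n1 n2 * P2"
  define G where "G = Z1 * (inl_mat n1 n2)\<^sup>T + Z2 * (inr_mat n1 n2)\<^sup>T"
  note iso = biproduct_iso_inl_inr[OF bp, folded F_def G_def]
  from bp have Z1: "Z1 \<in> carrier_mat n n1" and Z2: "Z2 \<in> carrier_mat n n2"
    unfolding is_biproduct_def by auto
  note [simp] = carrier_matD[OF B] carrier_matD[OF Z1] carrier_matD[OF Z2]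
    carrier_matD[OF T1] carrier_matD[OF T2] carrier_matD[OF iso(1)]
  have "G\<^sup>T * B * G = inl_mat n1 n2 * (Z1\<^sup>T * B * Z1) * (inl_mat n1 n2)\<^sup>T
      + inr_mat n1 n2 * (Z2\<^sup>T * B * Z2) * (inr_mat n1 n2)\<^sup>T"
    unfolding G_def
    by (simp add: add_mult_distrib_dim mult_add_distrib_dim transpose_add_dim transpose_mult_dim
        mult_assoc_dim mult_eq_assoc3[OF orth(1)] mult_eq_assoc3[OF orth(2)])
  then have "G\<^sup>T * B * G = infl_form n1 (Z1\<^sup>T * B * Z1) n2 (Z2\<^sup>T * B * Z2)"
    unfolding infl_form_def by (subst four_block_diag_eq) auto
  moreover have "F * T * F\<^sup>T = (F * Z1) * T1 * (F * Z1)\<^sup>T + (F * Z2) * T2 * (F * Z2)\<^sup>T"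
    unfolding T by (simp add: add_mult_distrib_dim mult_add_distrib_dim transpose_mult_dim mult_assoc_dim)
  then have "F * T * F\<^sup>T = infl_tensor n1 T1 n2 T2"
    unfolding infl_tensor_def four_block_diag_eq[OF T1 T2] iso(5,6) .
  moreover have "T \<in> carrier_mat n n" unfolding T by auto
  ultimately show ?thesis
    using E0_iso_of_congruence[OF B _ iso(1-4)] by blast
qed

section \<open>Fitting decomposition\<close>

lemma jordan_matrix_nonzero_imp_diag_eq:
  assumes "i < sum_list (map fst n_as)" "j < sum_list (map fst n_as)" "jordan_matrix n_as $$ (i,j) \<noteq> 0"
  shows "jordan_matrix n_as $$ (i,i) = jordan_matrix n_as $$ (j,j)"
  using assms
proof (induction n_as arbitrary: i j)
  case (Cons na n_as)
  obtain n a where na: "na = (n,a)" by (cases na)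
  let ?s = "sum_list (map fst n_as)"
  have i: "i < n + ?s" and j: "j < n + ?s" using Cons.prems na by auto
  note jm = jordan_matrix_Cons[of n a n_as]
  show ?case
  proof (cases "i < n"; cases "j < n")
    assume "\<not> i < n" "\<not> j < n"
    moreover have "jordan_matrix n_as $$ (i - n, j - n) \<noteq> 0"
      using Cons.prems(3) i j calculation unfolding na jm by auto
    ultimately show ?thesis
      using Cons.IH[of "i - n" "j - n"] i j unfolding na jm by auto
  qed (use Cons.prems(3) i j in \<open>auto simp: na jm split: if_splits\<close>)
qed simp

lemma fitting_projection_triangular:
  fixes J :: "'a :: field mat"
  assumes J: "J \<in> carrier_mat k k" and upper: "\<And>i j. i < k \<Longrightarrow> j < i \<Longrightarrow> J $$ (i,j) = 0"
    and diag: "\<And>i j. i < k \<Longrightarrow> j < k \<Longrightarrow> J $$ (i,j) \<noteq> 0 \<Longrightarrow> J $$ (i,i) = J $$ (j,j)"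
  obtains E R where "E \<in> carrier_mat k k" "R \<in> carrier_mat k k" "E * E = E" "E * J = J * E"
    "R * (J + (1\<^sub>m k - E)) = 1\<^sub>m k" "mat_trace (J * (1\<^sub>m k - E)) = 0"
proof -
  define e where "e i = (if J $$ (i,i) \<noteq> 0 then 1 else 0 :: 'a)" for i
  define E where "E = mat_diag k e"
  have E: "E \<in> carrier_mat k k" unfolding E_def by simp
  have one_minus_E: "1\<^sub>m k - E = mat_diag k (\<lambda>i. 1 - e i)"
    unfolding E_def by (rule eq_matI) (auto simp: mat_diag_def)
  have "(\<lambda>i. e i * e i) = e" by (auto simp: e_def)
  then have "E * E = E"
    unfolding E_def mat_diag_diag by simp
  moreover have "E * J = J * E"
  proof -
    have "e i * J $$ (i,j) = J $$ (i,j) * e j" if "i < k" "j < k" for i j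
      using diag[OF that] by (cases "J $$ (i,j) = 0") (auto simp: e_def)
    then show ?thesis
      unfolding E_def mat_diag_mult_left[OF J] mat_diag_mult_right[OF J] by (intro eq_matI) auto
  qed
  moreover obtain R where R: "R \<in> carrier_mat k k" "R * (J + (1\<^sub>m k - E)) = 1\<^sub>m k"
  proof -
    have A: "J + (1\<^sub>m k - E) \<in> carrier_mat k k" using J E by (intro carrier_matI) auto
    have "upper_triangular (J + (1\<^sub>m k - E))"
      unfolding upper_triangular_def one_minus_E using J upper by (auto simp: mat_diag_def)
    then have "det (J + (1\<^sub>m k - E)) = prod_list (diag_mat (J + (1\<^sub>m k - E)))"
      using det_upper_triangular A by blast
    also have "\<dots> \<noteq> 0"
      unfolding one_minus_E using J by (auto simp: diag_mat_def mat_diag_def e_def split: if_splits)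
    finally have "J + (1\<^sub>m k - E) \<in> Units (ring_mat TYPE('a) k ())"
      by (rule det_non_zero_imp_unit[OF A])
    then show thesis
      using that unfolding Units_def ring_mat_def by auto
  qed
  moreover have "mat_trace (J * (1\<^sub>m k - E)) = 0"
    unfolding one_minus_E mat_diag_mult_right[OF J] mat_trace_def by (auto simp: e_def)
  ultimately show thesis using that E by blast
qed

lemma fitting_projection_similar:
  fixes P :: "'a :: comm_ring_1 mat"
  assumes P: "P \<in> carrier_mat k k" and Q: "Q \<in> carrier_mat k k" and J: "J \<in> carrier_mat k k"
    and PQ: "P * Q = 1\<^sub>m k" and QP: "Q * P = 1\<^sub>m k"
    and EJ: "EJ \<in> carrier_mat k k" and RJ: "RJ \<in> carrier_mat k k" and EJEJ: "EJ * EJ = EJ"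
    and EJJ: "EJ * J = J * EJ" and RJ_inv: "RJ * (J + (1\<^sub>m k - EJ)) = 1\<^sub>m k"
    and trJ: "mat_trace (J * (1\<^sub>m k - EJ)) = 0"
  defines "M \<equiv> P * J * Q" and "E \<equiv> P * EJ * Q"
  shows "E * E = E" "E * M = M * E" "(P * RJ * Q) * (M + (1\<^sub>m k - E)) = 1\<^sub>m k"
    "mat_trace (M * (1\<^sub>m k - E)) = 0"
proof -
  note [simp] = carrier_matD[OF P] carrier_matD[OF Q] carrier_matD[OF J] carrier_matD[OF EJ]
    carrier_matD[OF RJ]
  have one_minus: "1\<^sub>m k - E = P * (1\<^sub>m k - EJ) * Q"
    unfolding E_def by (simp add: mult_minus_distrib_dim minus_mult_distrib_dim PQ)
  show "E * E = E"
    unfolding E_def by (simp add: mult_assoc_dim mult_eq_assoc[OF QP] mult_eq_assoc[OF EJEJ])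
  show "E * M = M * E"
    unfolding E_def M_def by (simp add: mult_assoc_dim mult_eq_assoc[OF QP] mult_eq_assoc[OF EJJ])
  have "M + (1\<^sub>m k - E) = P * (J + (1\<^sub>m k - EJ)) * Q"
    unfolding M_def one_minus by (simp add: mult_add_distrib_dim add_mult_distrib_dim)
  then show "(P * RJ * Q) * (M + (1\<^sub>m k - E)) = 1\<^sub>m k"
    by (simp add: mult_assoc_dim mult_eq_assoc[OF QP] mult_eq_assoc[OF RJ_inv] PQ)
  have "M * (1\<^sub>m k - E) = P * ((J * (1\<^sub>m k - EJ)) * Q)"
    unfolding M_def one_minus by (simp add: mult_assoc_dim mult_eq_assoc[OF QP])
  also have "mat_trace \<dots> = mat_trace (J * (1\<^sub>m k - EJ) * Q * P)"
    by (rule mat_trace_mult_comm[of _ k k]) auto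
  finally show "mat_trace (M * (1\<^sub>m k - E)) = 0" by (simp add: mult_assoc_dim QP trJ)
qed

lemma fitting_projection:
  fixes M :: "complex mat"
  assumes M: "M \<in> carrier_mat k k"
  obtains E R where "E \<in> carrier_mat k k" "R \<in> carrier_mat k k" "E * E = E" "E * M = M * E"
    "R * (M + (1\<^sub>m k - E)) = 1\<^sub>m k" "mat_trace (M * (1\<^sub>m k - E)) = 0"
proof -
  obtain as where "char_poly M = (\<Prod>a\<leftarrow>as. [:- a, 1:])"
    using char_poly_factorized[OF M] by auto
  then obtain n_as where "jordan_nf M n_as" using jordan_nf_exists[OF M] by blast
  then obtain P Q where "similar_mat_wit M (jordan_matrix n_as) P Q"
    unfolding jordan_nf_def similar_mat_def by blast
  from similar_mat_witD2[OF M this] have PQ: "P * Q = 1\<^sub>m k" and QP: "Q * P = 1\<^sub>m k"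
    and M_eq: "M = P * jordan_matrix n_as * Q" and J: "jordan_matrix n_as \<in> carrier_mat k k"
    and P: "P \<in> carrier_mat k k" and Q: "Q \<in> carrier_mat k k" by auto
  have size: "sum_list (map fst n_as) = k" using carrier_matD(1)[OF J] by simp
  obtain EJ RJ where "EJ \<in> carrier_mat k k" "RJ \<in> carrier_mat k k" "EJ * EJ = EJ"
    "EJ * jordan_matrix n_as = jordan_matrix n_as * EJ"
    "RJ * (jordan_matrix n_as + (1\<^sub>m k - EJ)) = 1\<^sub>m k"
    "mat_trace (jordan_matrix n_as * (1\<^sub>m k - EJ)) = 0"
    using fitting_projection_triangular[OF J] jordan_matrix_upper_triangular[of _ n_as]
      jordan_matrix_nonzero_imp_diag_eq[of _ n_as] unfolding size by blast
  note similar = fitting_projection_similar[OF P Q J PQ QP this, folded M_eq]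
  moreover have "P * EJ * Q \<in> carrier_mat k k" "P * RJ * Q \<in> carrier_mat k k"
    using P Q \<open>EJ \<in> carrier_mat k k\<close> \<open>RJ \<in> carrier_mat k k\<close> by auto
  ultimately show thesis using that by blast
qed

lemma mat_trace_biproduct:
  assumes bp: "is_biproduct k m Z1 P1 l Z2 P2" and M: "M \<in> carrier_mat k k"
  shows "mat_trace M = mat_trace (P1 * M * Z1) + mat_trace (P2 * M * Z2)"
proof -
  from bp have Z1: "Z1 \<in> carrier_mat k m" and P1: "P1 \<in> carrier_mat m k"
    and Z2: "Z2 \<in> carrier_mat k l" and P2: "P2 \<in> carrier_mat l k" and sum: "Z1 * P1 + Z2 * P2 = 1\<^sub>m k"
    unfolding is_biproduct_def by auto
  note [simp] = carrier_matD[OF M] carrier_matD[OF Z1] carrier_matD[OF P1] carrier_matD[OF Z2]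
    carrier_matD[OF P2]
  have "mat_trace M = mat_trace (M * Z1 * P1 + M * Z2 * P2)"
    by (simp add: mult_assoc_dim mult_add_distrib_dim[symmetric] sum)
  also have "\<dots> = mat_trace (M * Z1 * P1) + mat_trace (M * Z2 * P2)"
    by (rule mat_trace_add[of _ k]) auto
  also have "mat_trace (M * Z1 * P1) = mat_trace (P1 * (M * Z1))"
    by (rule mat_trace_mult_comm[of _ k m]) auto
  also have "mat_trace (M * Z2 * P2) = mat_trace (P2 * (M * Z2))"
    by (rule mat_trace_mult_comm[of _ k l]) auto
  finally show ?thesis by (simp add: mult_assoc_dim)
qed

lemma biproduct_block_diag:
  assumes bp: "is_biproduct k m Z1 P1 l Z2 P2" and M: "M \<in> carrier_mat k k"
    and EM: "Z1 * P1 * M = M * (Z1 * P1)"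
  shows "P1 * M * Z2 = 0\<^sub>m m l" "P2 * M * Z1 = 0\<^sub>m l m"
proof -
  from bp have Z1: "Z1 \<in> carrier_mat k m" and P1: "P1 \<in> carrier_mat m k"
    and Z2: "Z2 \<in> carrier_mat k l" and P2: "P2 \<in> carrier_mat l k"
    and P1Z1: "P1 * Z1 = 1\<^sub>m m" and P1Z2: "P1 * Z2 = 0\<^sub>m m l" and P2Z1: "P2 * Z1 = 0\<^sub>m l m"
    unfolding is_biproduct_def by auto
  note [simp] = carrier_matD[OF M] carrier_matD[OF Z1] carrier_matD[OF P1] carrier_matD[OF Z2]
    carrier_matD[OF P2]
  have "P1 * M * Z2 = P1 * (Z1 * P1 * M) * Z2"
    by (simp add: mult_assoc_dim mult_eq_assoc[OF P1Z1])
  also have "\<dots> = 0\<^sub>m m l"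
    by (simp add: EM mult_assoc_dim P1Z2)
  finally show "P1 * M * Z2 = 0\<^sub>m m l" .
  have "P2 * M * Z1 = P2 * (M * (Z1 * P1)) * Z1"
    by (simp add: mult_assoc_dim P1Z1)
  also have "\<dots> = 0\<^sub>m l m"
    by (simp add: EM[symmetric] mult_assoc_dim mult_eq_assoc[OF P2Z1])
  finally show "P2 * M * Z1 = 0\<^sub>m l m" .
qed

lemma fitting_block_invertible:
  fixes M :: "'a :: field mat"
  assumes M: "M \<in> carrier_mat k k" and Z1: "Z1 \<in> carrier_mat k m" and P1: "P1 \<in> carrier_mat m k"
    and P1Z1: "P1 * Z1 = 1\<^sub>m m" and EM: "Z1 * P1 * M = M * (Z1 * P1)"
    and R: "R \<in> carrier_mat k k" and R_inv: "R * (M + (1\<^sub>m k - Z1 * P1)) = 1\<^sub>m k"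
  obtains N where "N \<in> carrier_mat m m" "N * (P1 * M * Z1) = 1\<^sub>m m" "(P1 * M * Z1) * N = 1\<^sub>m m"
proof -
  note [simp] = carrier_matD[OF M] carrier_matD[OF Z1] carrier_matD[OF P1] carrier_matD[OF R]
  define N where "N = P1 * R * Z1"
  have N: "N \<in> carrier_mat m m" unfolding N_def by auto
  have "(M + (1\<^sub>m k - Z1 * P1)) * Z1 = M * Z1"
    by (simp add: add_mult_distrib_dim minus_mult_distrib_dim mult_assoc_dim P1Z1)
  then have "N * (P1 * M * Z1) = P1 * (R * (M + (1\<^sub>m k - Z1 * P1))) * Z1"
    unfolding N_def by (simp add: mult_assoc_dim mult_eq_assoc3[OF EM] P1Z1)
  then have left: "N * (P1 * M * Z1) = 1\<^sub>m m"
    unfolding R_inv by (simp add: P1Z1)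
  moreover have "(P1 * M * Z1) * N = 1\<^sub>m m"
    by (rule mat_mult_left_right_inverse[OF N _ left]) auto
  ultimately show thesis using that N by blast
qed

lemma fitting_biproduct:
  fixes M :: "complex mat"
  assumes M: "M \<in> carrier_mat k k"
  obtains m Z1 P1 l Z2 P2 N where "is_biproduct k m Z1 P1 l Z2 P2"
    "P1 * M * Z2 = 0\<^sub>m m l" "P2 * M * Z1 = 0\<^sub>m l m"
    "N \<in> carrier_mat m m" "N * (P1 * M * Z1) = 1\<^sub>m m" "(P1 * M * Z1) * N = 1\<^sub>m m"
    "mat_trace (P2 * M * Z2) = 0"
proof -
  obtain E R where E: "E \<in> carrier_mat k k" and R: "R \<in> carrier_mat k k" and EE: "E * E = E"
    and EM: "E * M = M * E" and R_inv: "R * (M + (1\<^sub>m k - E)) = 1\<^sub>m k"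
    and tr: "mat_trace (M * (1\<^sub>m k - E)) = 0"
    by (rule fitting_projection[OF M])
  obtain m Z1 P1 where Z1: "Z1 \<in> carrier_mat k m" and P1: "P1 \<in> carrier_mat m k"
    and P1Z1: "P1 * Z1 = 1\<^sub>m m" and Z1P1: "Z1 * P1 = E"
    by (rule idempotent_rank_factorization[OF E EE])
  obtain l Z2 P2 where "is_biproduct k l Z2 P2 m Z1 P1"
    by (rule biproduct_complement[OF Z1 P1 P1Z1])
  then have bp: "is_biproduct k m Z1 P1 l Z2 P2"
    using is_biproduct_commute by blast
  then have Z2: "Z2 \<in> carrier_mat k l" and P2: "P2 \<in> carrier_mat l k"
    and sum: "Z1 * P1 + Z2 * P2 = 1\<^sub>m k"
    unfolding is_biproduct_def by auto
  note [simp] = carrier_matD[OF M] carrier_matD[OF E] carrier_matD[OF Z2] carrier_matD[OF P2]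
  obtain N where "N \<in> carrier_mat m m" "N * (P1 * M * Z1) = 1\<^sub>m m" "(P1 * M * Z1) * N = 1\<^sub>m m"
    by (rule fitting_block_invertible[OF M Z1 P1 P1Z1 _ R]) (use EM R_inv in \<open>simp_all add: Z1P1\<close>)
  moreover have "Z2 * P2 = 1\<^sub>m k - Z1 * P1"
    by (rule add_eq_imp_eq_minus_mat(2)[OF sum]) (use Z1 P1 in auto)
  then have "mat_trace (P2 * M * Z2) = 0"
    using mat_trace_mult_comm[OF P2 mult_carrier_mat[OF M Z2]] tr unfolding Z1P1
    by (simp add: mult_assoc_dim)
  ultimately show thesis
    using that bp biproduct_block_diag[OF bp M] EM unfolding Z1P1 by blast
qed

section \<open>Splitting off copies of J2\<close>

text \<open>The columns \<open>x\<^sub>p\<close> of \<open>X\<close> and \<open>y\<^sub>p\<close> of \<open>Y\<close> span a copy of \<open>(\<Bbbk>\<^sup>2\<^sup>m, J2perp m)\<close> inside \<open>V\<close>.\<close>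
definition J2_frame :: "nat \<Rightarrow> complex mat \<Rightarrow> nat \<Rightarrow> complex mat \<Rightarrow> complex mat \<Rightarrow> bool" where
  "J2_frame n B m X Y \<longleftrightarrow> radical_factors n B m X Y \<and> X\<^sup>T * B * Y = 1\<^sub>m m"

lemma radical_factorization_fitting:
  assumes B: "B \<in> carrier_mat n n" and rf: "radical_factors n B k U W"
  obtains m U1 W1 l U2 W2 N where "radical_factors n B m U1 W1" "radical_factors n B l U2 W2"
    "U1\<^sup>T * B * W2 = 0\<^sub>m m l" "U2\<^sup>T * B * W1 = 0\<^sub>m l m" "U * W\<^sup>T = U1 * W1\<^sup>T + U2 * W2\<^sup>T"
    "N \<in> carrier_mat m m" "N * (U1\<^sup>T * B * W1) = 1\<^sub>m m" "(U1\<^sup>T * B * W1) * N = 1\<^sub>m m"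
    "mat_trace (U1\<^sup>T * B * W1) = mat_trace (U\<^sup>T * B * W)" "mat_trace (U2\<^sup>T * B * W2) = 0"
proof -
  from rf have U: "U \<in> carrier_mat n k" and W: "W \<in> carrier_mat n k"
    and BU: "B * U = 0\<^sub>m n k" and BW: "B\<^sup>T * W = 0\<^sub>m n k"
    unfolding radical_factors_def by auto
  have M: "U\<^sup>T * B * W \<in> carrier_mat k k" using B U W by auto
  obtain m Z1 P1 l Z2 P2 N where bp: "is_biproduct k m Z1 P1 l Z2 P2"
    and fit: "P1 * (U\<^sup>T * B * W) * Z2 = 0\<^sub>m m l" "P2 * (U\<^sup>T * B * W) * Z1 = 0\<^sub>m l m"
      "N \<in> carrier_mat m m" "N * (P1 * (U\<^sup>T * B * W) * Z1) = 1\<^sub>m m"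
      "(P1 * (U\<^sup>T * B * W) * Z1) * N = 1\<^sub>m m" "mat_trace (P2 * (U\<^sup>T * B * W) * Z2) = 0"
    by (rule fitting_biproduct[OF M])
  from bp have Z1: "Z1 \<in> carrier_mat k m" and P1: "P1 \<in> carrier_mat m k"
    and Z2: "Z2 \<in> carrier_mat k l" and P2: "P2 \<in> carrier_mat l k" and sum: "Z1 * P1 + Z2 * P2 = 1\<^sub>m k"
    unfolding is_biproduct_def by auto
  note [simp] = carrier_matD[OF B] carrier_matD[OF U] carrier_matD[OF W]
    carrier_matD[OF Z1] carrier_matD[OF P1] carrier_matD[OF Z2] carrier_matD[OF P2]
  have pairing: "(U * Pi\<^sup>T)\<^sup>T * B * (W * Zj) = Pi * (U\<^sup>T * B * W) * Zj"
    if "Pi \<in> carrier_mat mi k" "Zj \<in> carrier_mat k mj" for Pi Zj mi mj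
    using that by (simp add: transpose_mult_dim mult_assoc_dim)
  have "U * W\<^sup>T = U * (Z1 * P1 + Z2 * P2)\<^sup>T * W\<^sup>T" unfolding sum by simp
  also have "\<dots> = (U * P1\<^sup>T) * (W * Z1)\<^sup>T + (U * P2\<^sup>T) * (W * Z2)\<^sup>T"
    by (simp add: transpose_add_dim transpose_mult_dim add_mult_distrib_dim mult_add_distrib_dim
        mult_assoc_dim)
  finally have "U * W\<^sup>T = (U * P1\<^sup>T) * (W * Z1)\<^sup>T + (U * P2\<^sup>T) * (W * Z2)\<^sup>T" .
  moreover have "radical_factors n B m (U * P1\<^sup>T) (W * Z1)" "radical_factors n B l (U * P2\<^sup>T) (W * Z2)"
    unfolding radical_factors_def by (simp_all add: mult_assoc_dim[symmetric] BU BW carrier_matI)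
  moreover have "mat_trace (P1 * (U\<^sup>T * B * W) * Z1) = mat_trace (U\<^sup>T * B * W)"
    using mat_trace_biproduct[OF bp M] fit(6) by simp
  ultimately show thesis
    using that fit pairing[OF P1 Z1] pairing[OF P1 Z2] pairing[OF P2 Z1] pairing[OF P2 Z2] by metis
qed

lemma J2_frame_of_invertible_pairing:
  assumes B: "B \<in> carrier_mat n n" and rf: "radical_factors n B m X W" and N: "N \<in> carrier_mat m m"
    and N_left: "N * (X\<^sup>T * B * W) = 1\<^sub>m m" and N_right: "(X\<^sup>T * B * W) * N = 1\<^sub>m m"
  shows "J2_frame n B m X (W * N)" "X * (X\<^sup>T * B * W)\<^sup>T * (W * N)\<^sup>T = X * W\<^sup>T"
proof -
  from rf have X: "X \<in> carrier_mat n m" and W: "W \<in> carrier_mat n m"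
    and BW: "B\<^sup>T * W = 0\<^sub>m n m"
    unfolding radical_factors_def by auto
  note [simp] = carrier_matD[OF B] carrier_matD[OF X] carrier_matD[OF W] carrier_matD[OF N]
  show "J2_frame n B m X (W * N)"
    using rf N_right unfolding J2_frame_def radical_factors_def
    by (simp add: mult_assoc_dim mult_eq_assoc[OF BW] carrier_matI)
  have "(N * (X\<^sup>T * B * W))\<^sup>T = (X\<^sup>T * B * W)\<^sup>T * N\<^sup>T"
    by (rule transpose_mult_dim) simp
  then have CN: "(X\<^sup>T * B * W)\<^sup>T * N\<^sup>T = 1\<^sub>m m" unfolding N_left by simp
  have "X * (X\<^sup>T * B * W)\<^sup>T * (W * N)\<^sup>T = X * ((X\<^sup>T * B * W)\<^sup>T * N\<^sup>T) * W\<^sup>T"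
    by (simp add: transpose_mult_dim mult_assoc_dim)
  then show "X * (X\<^sup>T * B * W)\<^sup>T * (W * N)\<^sup>T = X * W\<^sup>T"
    unfolding CN by simp
qed

lemma radical_factorization_split:
  assumes B: "B \<in> carrier_mat n n" and rf: "radical_factors n B k U W"
  obtains m X Y C l U' W' where "J2_frame n B m X Y" "C \<in> carrier_mat m m"
    "radical_factors n B l U' W'" "X\<^sup>T * B * W' = 0\<^sub>m m l" "U'\<^sup>T * B * Y = 0\<^sub>m l m"
    "U * W\<^sup>T = X * C * Y\<^sup>T + U' * W'\<^sup>T"
    "mat_trace C = mat_trace (U\<^sup>T * B * W)" "mat_trace (U'\<^sup>T * B * W') = 0"
proof -
  obtain m X W1 l U' W' N where rf1: "radical_factors n B m X W1" and rf2: "radical_factors n B l U' W'"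
    and cross: "X\<^sup>T * B * W' = 0\<^sub>m m l" "U'\<^sup>T * B * W1 = 0\<^sub>m l m"
    and split: "U * W\<^sup>T = X * W1\<^sup>T + U' * W'\<^sup>T" and N: "N \<in> carrier_mat m m"
    and inv: "N * (X\<^sup>T * B * W1) = 1\<^sub>m m" "(X\<^sup>T * B * W1) * N = 1\<^sub>m m"
    and tr: "mat_trace (X\<^sup>T * B * W1) = mat_trace (U\<^sup>T * B * W)" "mat_trace (U'\<^sup>T * B * W') = 0"
    by (rule radical_factorization_fitting[OF B rf])
  note frame = J2_frame_of_invertible_pairing[OF B rf1 N inv]
  from rf1 rf2 have X: "X \<in> carrier_mat n m" and W1: "W1 \<in> carrier_mat n m" and U': "U' \<in> carrier_mat n l"
    unfolding radical_factors_def by auto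
  have C: "(X\<^sup>T * B * W1)\<^sup>T \<in> carrier_mat m m" using B X W1 by auto
  have "U'\<^sup>T * B * (W1 * N) = 0\<^sub>m l m"
    using B U' W1 N by (simp add: mult_assoc_dim[symmetric] cross(2))
  moreover have "mat_trace (X\<^sup>T * B * W1)\<^sup>T = mat_trace (U\<^sup>T * B * W)"
    using tr(1) mat_trace_transpose[of "X\<^sup>T * B * W1" m] B X W1 by auto
  ultimately show thesis
    using that[OF frame(1) C rf2 cross(1)] split frame(2) tr(2) by metis
qed

definition even_sel :: "nat \<Rightarrow> complex mat" where
  "even_sel m = select_mat (2 * m) (\<lambda>p. 2 * p) m"

definition odd_sel :: "nat \<Rightarrow> complex mat" where
  "odd_sel m = select_mat (2 * m) (\<lambda>p. 2 * p + 1) m"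

lemma J2perp_carrier [simp]:
  "J2perp m \<in> carrier_mat (2 * m) (2 * m)" "dim_row (J2perp m) = 2 * m" "dim_col (J2perp m) = 2 * m"
  unfolding J2perp_def by auto

lemma even_odd_sel_carrier [simp]:
  "even_sel m \<in> carrier_mat (2 * m) m" "dim_row (even_sel m) = 2 * m" "dim_col (even_sel m) = m"
  "odd_sel m \<in> carrier_mat (2 * m) m" "dim_row (odd_sel m) = 2 * m" "dim_col (odd_sel m) = m"
  unfolding even_sel_def odd_sel_def by auto

lemma is_biproduct_even_odd_sel:
  "is_biproduct (2 * m) m (even_sel m) (even_sel m)\<^sup>T m (odd_sel m) (odd_sel m)\<^sup>T"
proof -
  have "i \<in> (\<lambda>p. 2 * p) ` {..<m} \<union> (\<lambda>p. 2 * p + 1) ` {..<m}" if "i < 2 * m" for i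
  proof (cases "even i")
    case True
    then show ?thesis using that by (auto intro!: image_eqI[of _ _ "i div 2"])
  next
    case False
    then show ?thesis using that by (auto intro!: image_eqI[of _ _ "i div 2"] elim!: oddE)
  qed
  then have "(\<lambda>p. 2 * p) ` {..<m} \<union> (\<lambda>p. 2 * p + 1) ` {..<m} = {..<2 * m}" by auto
  moreover have "2 * p \<noteq> 2 * q + 1" for p q :: nat by presburger
  then have "(\<lambda>p. 2 * p) ` {..<m} \<inter> (\<lambda>p. 2 * p + 1) ` {..<m} = {}" by auto
  ultimately show ?thesis
    unfolding even_sel_def odd_sel_def by (intro is_biproduct_select_mat) (auto simp: inj_on_def)
qed

lemma J2perp_eq_even_odd_sel: "J2perp m = even_sel m * (odd_sel m)\<^sup>T"
proof -
  have inj: "inj_on (\<lambda>p. 2 * p) {..<m}" by (simp add: inj_on_def)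
  have "(even i \<and> j = i + 1) \<longleftrightarrow> (\<exists>p<m. i = 2 * p \<and> j = 2 * p + 1)" if "i < 2 * m" for i j
    using that by (auto elim!: evenE)
  then show ?thesis
    unfolding J2perp_def even_sel_def odd_sel_def select_mat_mult_transpose[OF inj]
    by (intro eq_matI) auto
qed

text \<open>\<open>J2_coords\<close> reads off the coordinates \<open>b(v, y\<^sub>p)\<close> and \<open>b(x\<^sub>p, v)\<close> of \<open>v\<close> with respect to
  \<open>J2_basis\<close>, which sends \<open>e\<^sub>2\<^sub>p\<close> to \<open>x\<^sub>p\<close> and \<open>e\<^sub>2\<^sub>p\<^sub>+\<^sub>1\<close> to \<open>y\<^sub>p\<close>.\<close>
definition J2_basis :: "nat \<Rightarrow> complex mat \<Rightarrow> complex mat \<Rightarrow> complex mat" where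
  "J2_basis m X Y = X * (even_sel m)\<^sup>T + Y * (odd_sel m)\<^sup>T"

definition J2_coords :: "nat \<Rightarrow> complex mat \<Rightarrow> complex mat \<Rightarrow> complex mat \<Rightarrow> complex mat" where
  "J2_coords m B X Y = even_sel m * (Y\<^sup>T * B\<^sup>T) + odd_sel m * (X\<^sup>T * B)"

lemma J2_frame_coordinates:
  assumes B: "B \<in> carrier_mat n n" and frame: "J2_frame n B m X Y"
  shows "J2_basis m X Y \<in> carrier_mat n (2 * m)" "J2_coords m B X Y \<in> carrier_mat (2 * m) n"
    "J2_coords m B X Y * J2_basis m X Y = 1\<^sub>m (2 * m)"
    "(J2_basis m X Y)\<^sup>T * B = J2perp m * J2_coords m B X Y"
    "(J2_basis m X Y)\<^sup>T * B\<^sup>T = (J2perp m)\<^sup>T * J2_coords m B X Y"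
    "J2_basis m X Y * even_sel m = X" "J2_basis m X Y * odd_sel m = Y"
proof -
  from frame have X: "X \<in> carrier_mat n m" and Y: "Y \<in> carrier_mat n m" and BX: "B * X = 0\<^sub>m n m"
    and BY: "B\<^sup>T * Y = 0\<^sub>m n m" and XBY: "X\<^sup>T * B * Y = 1\<^sub>m m"
    unfolding J2_frame_def radical_factors_def by auto
  let ?e = "even_sel m" and ?o = "odd_sel m" and ?G = "J2_basis m X Y" and ?K = "J2_coords m B X Y"
  have eo: "?e\<^sup>T * ?e = 1\<^sub>m m" "?o\<^sup>T * ?o = 1\<^sub>m m" "?e\<^sup>T * ?o = 0\<^sub>m m m" "?o\<^sup>T * ?e = 0\<^sub>m m m"
    "?e * ?e\<^sup>T + ?o * ?o\<^sup>T = 1\<^sub>m (2 * m)"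
    using is_biproduct_even_odd_sel[of m] unfolding is_biproduct_def by blast+
  note [simp] = carrier_matD[OF B] carrier_matD[OF X] carrier_matD[OF Y]
  show "?G \<in> carrier_mat n (2 * m)" "?K \<in> carrier_mat (2 * m) n"
    unfolding J2_basis_def J2_coords_def by auto
  have YB: "Y\<^sup>T * B = 0\<^sub>m m n" and XB: "X\<^sup>T * B\<^sup>T = 0\<^sub>m m n"
    using arg_cong[OF BY, of transpose_mat] arg_cong[OF BX, of transpose_mat]
    by (simp_all add: transpose_mult_dim)
  have XBY': "X\<^sup>T * (B * Y) = 1\<^sub>m m"
    using XBY by (simp add: mult_assoc_dim)
  have YBX: "Y\<^sup>T * (B\<^sup>T * X) = 1\<^sub>m m"
    using arg_cong[OF XBY, of transpose_mat] by (simp add: mult_assoc_dim transpose_mult_dim)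
  have KX: "?K * X = ?e" and KY: "?K * Y = ?o"
    unfolding J2_coords_def by (simp_all add: add_mult_distrib_dim mult_assoc_dim BX BY XBY' YBX)
  have "?K * ?G = (?K * X) * ?e\<^sup>T + (?K * Y) * ?o\<^sup>T"
    unfolding J2_basis_def J2_coords_def by (simp add: mult_add_distrib_dim mult_assoc_dim)
  then show "?K * ?G = 1\<^sub>m (2 * m)" unfolding KX KY eo(5) .
  show "?G\<^sup>T * B = J2perp m * ?K" "?G\<^sup>T * B\<^sup>T = (J2perp m)\<^sup>T * ?K"
    unfolding J2_basis_def J2_coords_def J2perp_eq_even_odd_sel
    by (simp_all add: transpose_add_dim transpose_mult_dim add_mult_distrib_dim mult_add_distrib_dim
        mult_assoc_dim mult_eq_assoc[OF eo(1)] mult_eq_assoc[OF eo(2)] mult_eq_assoc[OF eo(3)]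
        mult_eq_assoc[OF eo(4)] YB XB)
  show "?G * ?e = X" "?G * ?o = Y"
    unfolding J2_basis_def by (simp_all add: add_mult_distrib_dim mult_assoc_dim eo)
qed

lemma J2_frame_complement:
  assumes B: "B \<in> carrier_mat n n" and frame: "J2_frame n B m X Y"
  obtains n' Z P where "is_biproduct n n' Z P (2 * m) (J2_basis m X Y) (J2_coords m B X Y)"
    "Z\<^sup>T * B * J2_basis m X Y = 0\<^sub>m n' (2 * m)" "(J2_basis m X Y)\<^sup>T * B * Z = 0\<^sub>m (2 * m) n'"
proof -
  let ?G = "J2_basis m X Y" and ?K = "J2_coords m B X Y"
  note coords = J2_frame_coordinates[OF B frame]
  obtain n' Z P where bp: "is_biproduct n n' Z P (2 * m) ?G ?K"
    by (rule biproduct_complement[OF coords(1-3)])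
  then have Z: "Z \<in> carrier_mat n n'" and KZ: "?K * Z = 0\<^sub>m (2 * m) n'"
    unfolding is_biproduct_def by auto
  note [simp] = carrier_matD[OF B] carrier_matD[OF Z] carrier_matD[OF coords(1)] carrier_matD[OF coords(2)]
  have GBZ: "?G\<^sup>T * B * Z = 0\<^sub>m (2 * m) n'" and GBZ': "?G\<^sup>T * B\<^sup>T * Z = 0\<^sub>m (2 * m) n'"
    by (simp_all add: coords(4,5) mult_assoc_dim KZ)
  have "Z\<^sup>T * B * ?G = (?G\<^sup>T * B\<^sup>T * Z)\<^sup>T"
    by (simp add: transpose_mult_dim mult_assoc_dim)
  then have "Z\<^sup>T * B * ?G = 0\<^sub>m n' (2 * m)"
    unfolding GBZ' by simp
  with bp GBZ that show thesis by blast
qed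

lemma infl_triple_compression:
  assumes B: "B \<in> carrier_mat n n" and Z: "Z \<in> carrier_mat n n'" and P: "P \<in> carrier_mat n' n"
    and rf: "radical_factors n B l U W" and ZPU: "Z * (P * U) = U" and ZPW: "Z * (P * W) = W"
    and tr: "mat_trace (U\<^sup>T * B * W) = 0"
  shows "infl_triple n' (Z\<^sup>T * B * Z) ((P * U) * (P * W)\<^sup>T)"
proof -
  from rf have U: "U \<in> carrier_mat n l" and W: "W \<in> carrier_mat n l"
    and BU: "B * U = 0\<^sub>m n l" and BW: "B\<^sup>T * W = 0\<^sub>m n l"
    unfolding radical_factors_def by auto
  note [simp] = carrier_matD[OF B] carrier_matD[OF Z] carrier_matD[OF P] carrier_matD[OF U]
    carrier_matD[OF W]
  have B': "Z\<^sup>T * B * Z \<in> carrier_mat n' n'" by auto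
  have ZPU': "U\<^sup>T * P\<^sup>T * Z\<^sup>T = U\<^sup>T"
    using arg_cong[OF ZPU, of transpose_mat] by (simp add: transpose_mult_dim mult_assoc_dim)
  have "Z\<^sup>T * B * Z * (P * U) = 0\<^sub>m n' l" "(Z\<^sup>T * B * Z)\<^sup>T * (P * W) = 0\<^sub>m n' l"
    by (simp_all add: transpose_mult_dim mult_assoc_dim ZPU ZPW BU BW)
  then have "tensor_in n' ((P * U) * (P * W)\<^sup>T) (Rrad n' (Z\<^sup>T * B * Z)) (Lrad n' (Z\<^sup>T * B * Z))"
    by (intro tensor_in_radicals_factor[OF B']) (auto simp: radical_factors_def)
  moreover have "eval_tensor n' (Z\<^sup>T * B * Z) ((P * U) * (P * W)\<^sup>T) = mat_trace (U\<^sup>T * B * W)"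
    unfolding eval_tensor_factor[OF B' mult_carrier_mat[OF P U] mult_carrier_mat[OF P W]]
    by (simp add: transpose_mult_dim mult_assoc_dim ZPW mult_eq_assoc3[OF ZPU'])
  ultimately show ?thesis unfolding infl_triple_def using B' tr by simp
qed

lemma J2_coords_mult_eq_zero:
  assumes B: "B \<in> carrier_mat n n" and frame: "J2_frame n B m X Y" and rf: "radical_factors n B l U W"
    and XW: "X\<^sup>T * B * W = 0\<^sub>m m l" and UY: "U\<^sup>T * B * Y = 0\<^sub>m l m"
  shows "J2_coords m B X Y * U = 0\<^sub>m (2 * m) l" "J2_coords m B X Y * W = 0\<^sub>m (2 * m) l"
proof -
  from frame rf have X: "X \<in> carrier_mat n m" and Y: "Y \<in> carrier_mat n m"
    and U: "U \<in> carrier_mat n l" and W: "W \<in> carrier_mat n l"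
    and BU: "B * U = 0\<^sub>m n l" and BW: "B\<^sup>T * W = 0\<^sub>m n l"
    unfolding J2_frame_def radical_factors_def by auto
  note [simp] = carrier_matD[OF B] carrier_matD[OF X] carrier_matD[OF Y] carrier_matD[OF U]
    carrier_matD[OF W]
  have "Y\<^sup>T * (B\<^sup>T * U) = 0\<^sub>m m l"
    using arg_cong[OF UY, of transpose_mat] by (simp add: transpose_mult_dim mult_assoc_dim)
  moreover have "X\<^sup>T * (B * W) = 0\<^sub>m m l"
    using XW by (simp add: mult_assoc_dim)
  ultimately show "J2_coords m B X Y * U = 0\<^sub>m (2 * m) l" "J2_coords m B X Y * W = 0\<^sub>m (2 * m) l"
    unfolding J2_coords_def by (simp_all add: add_mult_distrib_dim mult_assoc_dim BU BW)
qed

lemma split_off_J2_frame: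
  assumes B: "B \<in> carrier_mat n n" and frame: "J2_frame n B m X Y" and C: "C \<in> carrier_mat m m"
    and rf: "radical_factors n B l U W" and XW: "X\<^sup>T * B * W = 0\<^sub>m m l" and UY: "U\<^sup>T * B * Y = 0\<^sub>m l m"
    and tr: "mat_trace (U\<^sup>T * B * W) = 0"
  obtains n' B' T' where "infl_triple n' B' T'"
    "E0_iso n B (X * C * Y\<^sup>T + U * W\<^sup>T) (n' + 2 * m) (infl_form n' B' (2 * m) (J2perp m))
       (infl_tensor n' T' (2 * m) (even_sel m * C * (odd_sel m)\<^sup>T))"
proof -
  let ?G = "J2_basis m X Y" and ?K = "J2_coords m B X Y" and ?T = "even_sel m * C * (odd_sel m)\<^sup>T"
  note coords = J2_frame_coordinates[OF B frame]
  obtain n' Z P where bp: "is_biproduct n n' Z P (2 * m) ?G ?K"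
    and orth: "Z\<^sup>T * B * ?G = 0\<^sub>m n' (2 * m)" "?G\<^sup>T * B * Z = 0\<^sub>m (2 * m) n'"
    by (rule J2_frame_complement[OF B frame])
  from bp frame rf have Z: "Z \<in> carrier_mat n n'" and P: "P \<in> carrier_mat n' n"
    and X: "X \<in> carrier_mat n m" and Y: "Y \<in> carrier_mat n m"
    and U: "U \<in> carrier_mat n l" and W: "W \<in> carrier_mat n l" and sum: "Z * P + ?G * ?K = 1\<^sub>m n"
    unfolding is_biproduct_def J2_frame_def radical_factors_def by auto
  note [simp] = carrier_matD[OF B] carrier_matD[OF X] carrier_matD[OF Y] carrier_matD[OF C]
    carrier_matD[OF U] carrier_matD[OF W] carrier_matD[OF coords(1)] carrier_matD[OF coords(2)]
    carrier_matD[OF Z] carrier_matD[OF P]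
  have "Z * P = 1\<^sub>m n - ?G * ?K"
    by (rule add_eq_imp_eq_minus_mat(1)[OF sum]) auto
  then have "Z * (P * U) = (1\<^sub>m n - ?G * ?K) * U" "Z * (P * W) = (1\<^sub>m n - ?G * ?K) * W"
    by (simp_all add: mult_assoc_dim[symmetric])
  then have ZPU: "Z * (P * U) = U" and ZPW: "Z * (P * W) = W"
    using J2_coords_mult_eq_zero[OF B frame rf XW UY]
    by (simp_all add: minus_mult_distrib_dim mult_assoc_dim)
  have "X * C * Y\<^sup>T + U * W\<^sup>T = Z * ((P * U) * (P * W)\<^sup>T) * Z\<^sup>T + ?G * ?T * ?G\<^sup>T" (is "_ = ?split")
  proof -
    have "?G * ?T * ?G\<^sup>T = (?G * even_sel m) * C * (?G * odd_sel m)\<^sup>T"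
      by (simp add: transpose_mult_dim mult_assoc_dim)
    moreover have "Z * ((P * U) * (P * W)\<^sup>T) * Z\<^sup>T = (Z * (P * U)) * (Z * (P * W))\<^sup>T"
      by (simp add: transpose_mult_dim mult_assoc_dim)
    ultimately show ?thesis
      unfolding coords(6,7) ZPU ZPW using X Y U W C by (simp add: comm_add_mat[of _ n n])
  qed
  moreover have "?G\<^sup>T * B * ?G = J2perp m"
    by (simp add: mult_assoc_dim mult_eq_assoc[OF coords(4)] coords(3))
  moreover have "(P * U) * (P * W)\<^sup>T \<in> carrier_mat n' n'" "?T \<in> carrier_mat (2 * m) (2 * m)"
    by auto
  ultimately have "E0_iso n B (X * C * Y\<^sup>T + U * W\<^sup>T) (n' + 2 * m)
      (infl_form n' (Z\<^sup>T * B * Z) (2 * m) (J2perp m)) (infl_tensor n' ((P * U) * (P * W)\<^sup>T) (2 * m) ?T)"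
    using E0_iso_inflation[OF bp B orth, of "(P * U) * (P * W)\<^sup>T" ?T ?split] by simp
  moreover have "infl_triple n' (Z\<^sup>T * B * Z) ((P * U) * (P * W)\<^sup>T)"
    by (rule infl_triple_compression[OF B Z P rf ZPU ZPW tr])
  ultimately show thesis using that by blast
qed

lemma E0_obj_J2perp:
  assumes C: "C \<in> carrier_mat m m" and tr: "mat_trace C = 1"
  shows "E0_obj (2 * m) (J2perp m) (even_sel m * C * (odd_sel m)\<^sup>T)"
proof -
  let ?e = "even_sel m" and ?o = "odd_sel m"
  have eo: "?e\<^sup>T * ?e = 1\<^sub>m m" "?o\<^sup>T * ?o = 1\<^sub>m m" "?e\<^sup>T * ?o = 0\<^sub>m m m" "?o\<^sup>T * ?e = 0\<^sub>m m m"
    using is_biproduct_even_odd_sel[of m] unfolding is_biproduct_def by blast+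
  have J: "J2perp m \<in> carrier_mat (2 * m) (2 * m)" by simp
  note [simp] = carrier_matD[OF C]
  have T: "?e * C * ?o\<^sup>T = ?e * (?o * C\<^sup>T)\<^sup>T"
    by (simp add: transpose_mult_dim mult_assoc_dim)
  have "J2perp m * ?e = 0\<^sub>m (2 * m) m" "(J2perp m)\<^sup>T * (?o * C\<^sup>T) = 0\<^sub>m (2 * m) m"
    unfolding J2perp_eq_even_odd_sel
    by (simp_all add: transpose_mult_dim mult_assoc_dim mult_eq_assoc[OF eo(3)] mult_eq_assoc[OF eo(4)] eo)
  then have "tensor_in (2 * m) (?e * C * ?o\<^sup>T) (Rrad (2 * m) (J2perp m)) (Lrad (2 * m) (J2perp m))"
    unfolding T by (intro tensor_in_radicals_factor[OF J]) (auto simp: radical_factors_def)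
  moreover have "eval_tensor (2 * m) (J2perp m) (?e * C * ?o\<^sup>T) = 1"
  proof -
    have "eval_tensor (2 * m) (J2perp m) (?e * (?o * C\<^sup>T)\<^sup>T) = mat_trace (?e\<^sup>T * J2perp m * (?o * C\<^sup>T))"
      by (rule eval_tensor_factor[OF J]) auto
    also have "\<dots> = mat_trace C\<^sup>T"
      unfolding J2perp_eq_even_odd_sel
      by (simp add: mult_assoc_dim mult_eq_assoc[OF eo(1)] mult_eq_assoc[OF eo(2)])
    finally show ?thesis unfolding T using tr mat_trace_transpose[OF C] by simp
  qed
  ultimately show ?thesis unfolding E0_obj_def using J by simp
qed

theorem mainTheorem19:
  fixes n :: nat and B T :: "complex mat"
  assumes "E0_obj n B T"
  shows "\<exists>m n' B' T' T''. m > 0 \<and> E0_obj (2*m) (J2perp m) T'' \<and> infl_triple n' B' T'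
     \<and> E0_iso n B T (n' + 2*m) (infl_form n' B' (2*m) (J2perp m)) (infl_tensor n' T' (2*m) T'')"
proof -
  from assms have B: "B \<in> carrier_mat n n" and tin: "tensor_in n T (Rrad n B) (Lrad n B)"
    and ev: "eval_tensor n B T = 1"
    unfolding E0_obj_def by auto
  obtain k U W where rf: "radical_factors n B k U W" and T: "T = U * W\<^sup>T"
    using tin unfolding tensor_in_radicals_iff[OF B] by blast
  have tr: "mat_trace (U\<^sup>T * B * W) = 1"
    using ev rf eval_tensor_factor[OF B] unfolding T radical_factors_def by metis
  obtain m X Y C l U' W' where frame: "J2_frame n B m X Y" and C: "C \<in> carrier_mat m m"
    and rest: "radical_factors n B l U' W'" "X\<^sup>T * B * W' = 0\<^sub>m m l" "U'\<^sup>T * B * Y = 0\<^sub>m l m"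
    and T_eq: "U * W\<^sup>T = X * C * Y\<^sup>T + U' * W'\<^sup>T"
    and trC: "mat_trace C = mat_trace (U\<^sup>T * B * W)" and trN: "mat_trace (U'\<^sup>T * B * W') = 0"
    by (rule radical_factorization_split[OF B rf])
  have T_split: "T = X * C * Y\<^sup>T + U' * W'\<^sup>T" unfolding T T_eq ..
  obtain n' B' T' where "infl_triple n' B' T'"
    "E0_iso n B T (n' + 2 * m) (infl_form n' B' (2 * m) (J2perp m))
       (infl_tensor n' T' (2 * m) (even_sel m * C * (odd_sel m)\<^sup>T))"
    by (rule split_off_J2_frame[OF B frame C rest trN, folded T_split])
  moreover have "m > 0"
  proof (rule ccontr)
    assume "\<not> m > 0"
    then have "mat_trace C = 0" using C by (simp add: mat_trace_def)
    then show False using trC tr by simp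
  qed
  moreover have "E0_obj (2 * m) (J2perp m) (even_sel m * C * (odd_sel m)\<^sup>T)"
    using E0_obj_J2perp[OF C] trC tr by simp
  ultimately show ?thesis by (intro exI conjI)
qed

end
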